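(* Let $\alpha=(\alpha_1,\ldots,\alpha_n)$ be a composition (a sequence of nonnegative integers). Then the vertex set of the Newton polytope $\mathrm{Newton}(\kappa_\alpha)$ of the key polynomial $\kappa_\alpha(x)$ is $\{\beta\colon \beta\le\alpha\}$.
   Context: For a polynomial $f=\sum_\alpha c_\alpha x^\alpha\in\mathbb{R}[x_1,\ldots,x_n]$, $\mathrm{Newton}(f)$ is the convex hull of $\{\alpha\colon c_\alpha\neq0\}$. Let $\partial_i f=(f-s_if)/(x_i-x_{i+1})$, where $s_if$ swaps $x_i$ and $x_{i+1}$, and $\pi_i f=\partial_i(x_if)$. Key polynomials: if $\alpha$ is weakly decreasing, $\kappa_\alpha=x^\alpha=x_1^{\alpha_1}\cdots x_n^{\alpha_n}$; otherwise choose $i$ with $\alpha_i<\alpha_{i+1}$, let $\alpha'$ be $\alpha$ with $\alpha_i,\alpha_{i+1}$ interchanged, and set $\kappa_\alpha=\pi_i\kappa_{\alpha'}$ (this is well defined). For $v\in\mathbb{R}^n$ and $w=w_1\cdots w_n\in S_n$, define $v\cdot w=(v_{w_1},\ldots,v_{w_n})$. Let $\lambda(\alpha)$ be the weakly decreasing rearrangement of $\alpha$, and $w(\alpha)$ the unique permutation of minimal length with $\lambda(\alpha)\cdot w(\alpha)=\alpha$. For compositions $\alpha,\beta$ of length $n$, $\beta\le\alpha$ means $\lambda(\beta)=\lambda(\alpha)$ and $w(\beta)\le w(\alpha)$ in the (strong) Bruhat order on $S_n$. *)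

theory Defs
  imports "HOL-Analysis.Analysis" "HOL-Library.Poly_Mapping" "HOL-Library.Function_Algebras"
    "HOL-Combinatorics.Transposition" "HOL-Combinatorics.Permutations"
begin

instantiation "fun" :: (type, real_vector) real_vector
begin
definition scaleR_fun_def: "scaleR r f = (\<lambda>x. r *\<^sub>R f x)"
instance
  by standard (auto simp: scaleR_fun_def fun_eq_iff algebra_simps scaleR_left_distrib)
end

section \<open>Polynomials in variables x_0, x_1, ... (0-based; paper's x_{i+1} is our x_i)\<close>

type_synonym mpoly = "(nat \<Rightarrow>\<^sub>0 nat) \<Rightarrow>\<^sub>0 real"

definition var :: "nat \<Rightarrow> mpoly" where
  "var i = Poly_Mapping.single (Poly_Mapping.single i 1) 1"

definition monom :: "nat list \<Rightarrow> mpoly" where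
  "monom \<beta> = Poly_Mapping.single (Poly_Mapping.nth \<beta>) 1"

definition swap_exp :: "nat \<Rightarrow> (nat \<Rightarrow>\<^sub>0 nat) \<Rightarrow> (nat \<Rightarrow>\<^sub>0 nat)" where
  "swap_exp i m = Poly_Mapping.map_key (Transposition.transpose i (Suc i)) m"

definition swapvar :: "nat \<Rightarrow> mpoly \<Rightarrow> mpoly" where
  "swapvar i f = Poly_Mapping.map_key (swap_exp i) f"

definition divdiff :: "nat \<Rightarrow> mpoly \<Rightarrow> mpoly" where
  "divdiff i f = (THE g. (var i - var (Suc i)) * g = f - swapvar i f)"

definition demazure :: "nat \<Rightarrow> mpoly \<Rightarrow> mpoly" where
  "demazure i f = divdiff i (var i * f)"

text \<open>Key polynomials, via the recursive rule of the paper (as a relation; it is well defined)\<close>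
inductive keyrel :: "nat list \<Rightarrow> mpoly \<Rightarrow> bool" where
  dec: "sorted_wrt (\<ge>) \<alpha> \<Longrightarrow> keyrel \<alpha> (monom \<alpha>)"
| step: "Suc i < length \<alpha> \<Longrightarrow> \<alpha> ! i < \<alpha> ! Suc i \<Longrightarrow>
          keyrel (\<alpha>[i := \<alpha> ! Suc i, Suc i := \<alpha> ! i]) g \<Longrightarrow> keyrel \<alpha> (demazure i g)"

definition key :: "nat list \<Rightarrow> mpoly" where
  "key \<alpha> = (THE f. keyrel \<alpha> f)"

text \<open>exponent vector as a point of R^n (coordinates beyond n are 0)\<close>
definition exp_point :: "(nat \<Rightarrow>\<^sub>0 nat) \<Rightarrow> (nat \<Rightarrow> real)" where
  "exp_point m = (\<lambda>k. real (Poly_Mapping.lookup m k))"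

definition newton :: "mpoly \<Rightarrow> (nat \<Rightarrow> real) set" where
  "newton f = convex hull (exp_point ` Poly_Mapping.keys f)"

definition vertices :: "(nat \<Rightarrow> real) set \<Rightarrow> (nat \<Rightarrow> real) set" where
  "vertices P = {v. v extreme_point_of P}"

definition act :: "nat list \<Rightarrow> (nat \<Rightarrow> nat) \<Rightarrow> nat list" where
  "act v w = map (\<lambda>i. v ! w i) [0..<length v]"

definition perm_length :: "nat \<Rightarrow> (nat \<Rightarrow> nat) \<Rightarrow> nat" where
  "perm_length n w = card {(i, j). i < j \<and> j < n \<and> w j < w i}"

definition bruhat_cover :: "nat \<Rightarrow> (nat \<Rightarrow> nat) \<Rightarrow> (nat \<Rightarrow> nat) \<Rightarrow> bool" where
  "bruhat_cover n u v \<longleftrightarrow> (\<exists>i j. i < j \<and> j < n \<and> v = u \<circ> Transposition.transpose i j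
       \<and> perm_length n u < perm_length n v)"

definition bruhat_le :: "nat \<Rightarrow> (nat \<Rightarrow> nat) \<Rightarrow> (nat \<Rightarrow> nat) \<Rightarrow> bool" where
  "bruhat_le n u v \<longleftrightarrow> u permutes {..<n} \<and> v permutes {..<n} \<and> (bruhat_cover n)\<^sup>*\<^sup>* u v"

definition lam :: "nat list \<Rightarrow> nat list" where
  "lam \<alpha> = rev (sort \<alpha>)"

definition wperm :: "nat list \<Rightarrow> (nat \<Rightarrow> nat)" where
  "wperm \<alpha> = (THE w. w permutes {..<length \<alpha>} \<and> act (lam \<alpha>) w = \<alpha> \<and>
     (\<forall>u. u permutes {..<length \<alpha>} \<and> act (lam \<alpha>) u = \<alpha> \<longrightarrow>
          perm_length (length \<alpha>) w \<le> perm_length (length \<alpha>) u))"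

definition comp_le :: "nat list \<Rightarrow> nat list \<Rightarrow> bool" where
  "comp_le \<beta> \<alpha> \<longleftrightarrow> length \<beta> = length \<alpha> \<and> lam \<beta> = lam \<alpha> \<and>
     bruhat_le (length \<alpha>) (wperm \<beta>) (wperm \<alpha>)"

end

(* Write L(alpha) for the set of compositions beta with the same entries as alpha such
   that, for every k, the first k entries of beta, sorted, dominate those of alpha
   entrywise; by the tableau criterion for the Bruhat order, L(alpha) = {beta. beta <= alpha}.
   If alpha has an ascent at i and alpha' = s_i alpha, then
   L(alpha) = L(alpha') Un s_i L(alpha'), mirroring kappa_alpha = pi_i kappa_alpha'.
   Every monomial of pi_i x^m has its exponent on the segment from m to s_i m, so by
   induction all exponents of kappa_alpha lie in the convex hull of L(alpha), and every
   beta in L(alpha) has coefficient 1: being extreme, it only receives contributions from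
   x^beta and x^(s_i beta). All points of L(alpha) have the same Euclidean norm, so each
   is a vertex of their hull. That kappa_alpha is well defined follows from the
   commutation and braid relations of the operators pi_i. *)

theory Submission
  imports Defs
begin

section \<open>The tableau order on compositions\<close>

definition swap_entries :: "nat \<Rightarrow> nat \<Rightarrow> nat list \<Rightarrow> nat list" where
  "swap_entries i j \<gamma> = \<gamma>[i := \<gamma>!j, j := \<gamma>!i]"

lemma length_swap_entries [simp]: "length (swap_entries i j \<gamma>) = length \<gamma>"
  by (simp add: swap_entries_def)

lemma nth_swap_entries:
  "i < length \<gamma> \<Longrightarrow> j < length \<gamma> \<Longrightarrow>
   swap_entries i j \<gamma> ! k = (if k = j then \<gamma>!i else if k = i then \<gamma>!j else \<gamma>!k)"
  by (auto simp: swap_entries_def nth_list_update)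

lemma nth_swap_entries_transpose:
  "i < length \<gamma> \<Longrightarrow> j < length \<gamma> \<Longrightarrow> swap_entries i j \<gamma> ! k = \<gamma> ! Transposition.transpose i j k"
  by (auto simp: nth_swap_entries Transposition.transpose_def)

lemma mset_swap_entries:
  "i < length \<gamma> \<Longrightarrow> j < length \<gamma> \<Longrightarrow> mset (swap_entries i j \<gamma>) = mset \<gamma>"
  unfolding swap_entries_def by (rule mset_swap)

lemma swap_entries_swap_entries [simp]:
  "i < length \<gamma> \<Longrightarrow> j < length \<gamma> \<Longrightarrow> swap_entries i j (swap_entries i j \<gamma>) = \<gamma>"
  by (rule nth_equalityI) (auto simp: nth_swap_entries)

lemma swap_entries_eq_self:
  "i < length \<gamma> \<Longrightarrow> j < length \<gamma> \<Longrightarrow> \<gamma>!i = \<gamma>!j \<Longrightarrow> swap_entries i j \<gamma> = \<gamma>"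
  by (rule nth_equalityI) (auto simp: nth_swap_entries)

definition prefix_count :: "nat list \<Rightarrow> nat \<Rightarrow> nat \<Rightarrow> int" where
  "prefix_count \<gamma> k t = (\<Sum>q<k. if t \<le> \<gamma>!q then 1 else 0)"

lemma prefix_count_Suc:
  "prefix_count \<gamma> (Suc k) t = prefix_count \<gamma> k t + (if t \<le> \<gamma>!k then 1 else 0)"
  by (simp add: prefix_count_def)

lemma prefix_count_cong:
  "(\<And>q. q < k \<Longrightarrow> \<beta>!q = \<alpha>!q) \<Longrightarrow> prefix_count \<beta> k t = prefix_count \<alpha> k t"
  unfolding prefix_count_def by (rule sum.cong) auto

lemma prefix_count_split:
  "p \<le> k \<Longrightarrow> prefix_count \<gamma> k t = prefix_count \<gamma> p t + (\<Sum>q\<in>{p..<k}. if t \<le> \<gamma>!q then 1 else 0)"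
  unfolding prefix_count_def by (metis atLeast0LessThan sum.atLeastLessThan_concat zero_le)

lemma prefix_count_swap_entries:
  assumes "i < j" "j < length \<gamma>"
  shows "prefix_count (swap_entries i j \<gamma>) k t = prefix_count \<gamma> k t +
    (if i < k \<and> k \<le> j then (if t \<le> \<gamma>!j then 1 else 0) - (if t \<le> \<gamma>!i then 1 else 0) else 0)"
proof -
  let ?f = "\<lambda>q. (if t \<le> \<gamma>!q then 1 else 0) :: int"
  let ?g = "\<lambda>q. (if t \<le> swap_entries i j \<gamma>!q then 1 else 0) :: int"
  have "\<And>q. ?g q - ?f q = (if q = i then ?f j - ?f i else 0) + (if q = j then ?f i - ?f j else 0)"
    using assms by (auto simp: nth_swap_entries)
  hence "(\<Sum>q<k. ?g q - ?f q) =
      (\<Sum>q<k. if q = i then ?f j - ?f i else 0) + (\<Sum>q<k. if q = j then ?f i - ?f j else 0)"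
    by (simp add: sum.distrib)
  also have "\<dots> = (if i < k then ?f j - ?f i else 0) + (if j < k then ?f i - ?f j else 0)"
    by (simp add: sum.delta)
  finally show ?thesis
    using assms unfolding prefix_count_def by (auto simp: sum_subtractf)
qed

lemma prefix_count_swap_adjacent:
  assumes "Suc i < length \<gamma>"
  shows "prefix_count (swap_entries i (Suc i) \<gamma>) k t = prefix_count \<gamma> k t +
    (if k = Suc i then (if t \<le> \<gamma>!Suc i then 1 else 0) - (if t \<le> \<gamma>!i then 1 else 0) else 0)"
proof -
  have "(i < k \<and> k \<le> Suc i) = (k = Suc i)" by auto
  thus ?thesis using prefix_count_swap_entries[of i "Suc i" \<gamma> k t] assms by simp
qed

text \<open>This is the tableau criterion for the Bruhat order: for every \<open>k\<close>, the \<open>k\<close> first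
  entries of \<open>\<beta>\<close>, sorted, dominate those of \<open>\<alpha>\<close> entrywise.\<close>

definition tableau_le :: "nat list \<Rightarrow> nat list \<Rightarrow> bool" where
  "tableau_le \<beta> \<alpha> \<longleftrightarrow> (\<forall>k\<le>length \<alpha>. \<forall>t. prefix_count \<alpha> k t \<le> prefix_count \<beta> k t)"

definition tableau_lower :: "nat list \<Rightarrow> nat list set" where
  "tableau_lower \<alpha> = {\<beta>. length \<beta> = length \<alpha> \<and> mset \<beta> = mset \<alpha> \<and> tableau_le \<beta> \<alpha>}"

lemma tableau_le_refl: "tableau_le \<alpha> \<alpha>"
  by (simp add: tableau_le_def)

lemma tableau_le_trans:
  "tableau_le \<gamma> \<beta> \<Longrightarrow> tableau_le \<beta> \<alpha> \<Longrightarrow> length \<beta> = length \<alpha> \<Longrightarrow> tableau_le \<gamma> \<alpha>"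
  unfolding tableau_le_def by (metis order_trans)

lemma tableau_le_swap_entries:
  assumes "i < j" "j < length \<gamma>" "\<gamma>!j \<le> \<gamma>!i"
  shows "tableau_le \<gamma> (swap_entries i j \<gamma>)"
  unfolding tableau_le_def using assms by (auto simp: prefix_count_swap_entries)

lemma self_mem_tableau_lower: "\<alpha> \<in> tableau_lower \<alpha>"
  by (simp add: tableau_lower_def tableau_le_refl)

lemma tableau_lower_first_difference:
  assumes \<beta>: "\<beta> \<in> tableau_lower \<alpha>" and ne: "\<beta> \<noteq> \<alpha>"
  obtains p q where "p < q" "q < length \<alpha>" "\<forall>r<p. \<beta>!r = \<alpha>!r" "\<alpha>!p < \<beta>!p" "\<alpha>!q = \<beta>!p"
proof -
  let ?n = "length \<alpha>"
  have len: "length \<beta> = ?n" and ms: "mset \<beta> = mset \<alpha>" and D: "tableau_le \<beta> \<alpha>"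
    using \<beta> by (auto simp: tableau_lower_def)
  have ex: "\<exists>q. q < ?n \<and> \<beta>!q \<noteq> \<alpha>!q" using len ne nth_equalityI by metis
  define p where "p = (LEAST q. q < ?n \<and> \<beta>!q \<noteq> \<alpha>!q)"
  have p: "p < ?n" "\<beta>!p \<noteq> \<alpha>!p" using LeastI_ex[OF ex] unfolding p_def by auto
  have pre: "\<forall>r<p. \<beta>!r = \<alpha>!r"
  proof (intro allI impI)
    fix r assume "r < p"
    with not_less_Least[of r "\<lambda>q. q < ?n \<and> \<beta>!q \<noteq> \<alpha>!q"] p(1)
    show "\<beta>!r = \<alpha>!r" unfolding p_def by auto
  qed
  have "prefix_count \<alpha> (Suc p) (\<alpha>!p) \<le> prefix_count \<beta> (Suc p) (\<alpha>!p)"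
    using D p(1) by (simp add: tableau_le_def)
  moreover have "prefix_count \<beta> p (\<alpha>!p) = prefix_count \<alpha> p (\<alpha>!p)"
    by (rule prefix_count_cong) (use pre in auto)
  ultimately have "\<alpha>!p \<le> \<beta>!p" by (auto simp: prefix_count_Suc split: if_splits)
  hence lt: "\<alpha>!p < \<beta>!p" using p(2) by auto
  have "take p \<beta> = take p \<alpha>" by (rule nth_equalityI) (use pre p len in auto)
  with ms have "mset (drop p \<beta>) = mset (drop p \<alpha>)"
    by (metis add_left_imp_eq append_take_drop_id mset_append)
  moreover have "\<beta>!p \<in> set (drop p \<beta>)" using p len by (metis Cons_nth_drop_Suc list.set_intros(1))
  ultimately have "\<beta>!p \<in> set (drop p \<alpha>)" by (metis set_mset_mset)
  then obtain r where r: "r < length (drop p \<alpha>)" "drop p \<alpha> ! r = \<beta>!p" by (auto simp: in_set_conv_nth)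
  hence "\<alpha>!(p+r) = \<beta>!p" "p + r < ?n" by auto
  moreover have "r \<noteq> 0" using calculation p by (metis add_0_right)
  ultimately show ?thesis using that[of p "p + r"] pre lt by auto
qed

lemma tableau_lower_sorted:
  assumes "sorted_wrt (\<ge>) \<alpha>" "\<beta> \<in> tableau_lower \<alpha>"
  shows "\<beta> = \<alpha>"
proof (rule ccontr)
  assume "\<beta> \<noteq> \<alpha>"
  then obtain p q where pq: "p < q" "q < length \<alpha>" and "\<alpha>!p < \<beta>!p" "\<alpha>!q = \<beta>!p"
    using tableau_lower_first_difference assms(2) by metis
  moreover have "\<alpha>!q \<le> \<alpha>!p" using sorted_wrt_nth_less[OF assms(1) pq] by simp
  ultimately show False by simp
qed

text \<open>For \<open>i < k \<le> j\<close> and \<open>\<alpha>!p < t \<le> \<alpha>!j\<close>, the gap hypothesis makes the counts of \<open>\<alpha>\<close> on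
  \<open>[p, k)\<close> at thresholds \<open>t\<close> and \<open>\<beta>!p + 1\<close> agree, while for \<open>\<beta>\<close> the entry \<open>\<beta>!p\<close> counts
  only at \<open>t\<close>: this leaves room for the extra entry that the swap adds to \<open>\<alpha>\<close>.\<close>

lemma tableau_le_swap_entries_gap:
  assumes D: "tableau_le \<beta> \<alpha>" and pre: "\<forall>r<p. \<beta>!r = \<alpha>!r"
    and ij: "p \<le> i" "i < j" "j < length \<alpha>" "\<alpha>!i = \<alpha>!p" "\<alpha>!p < \<alpha>!j" "\<alpha>!j \<le> \<beta>!p"
    and gap: "\<And>m. p < m \<Longrightarrow> m < j \<Longrightarrow> \<not> (\<alpha>!p < \<alpha>!m \<and> \<alpha>!m \<le> \<beta>!p)"
  shows "tableau_le \<beta> (swap_entries i j \<alpha>)"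
  unfolding tableau_le_def
proof (intro allI impI)
  fix k t assume "k \<le> length (swap_entries i j \<alpha>)"
  hence kn: "k \<le> length \<alpha>" by simp
  have c0: "prefix_count \<alpha> k t \<le> prefix_count \<beta> k t" using D kn by (simp add: tableau_le_def)
  have cs: "prefix_count (swap_entries i j \<alpha>) k t = prefix_count \<alpha> k t +
      (if i < k \<and> k \<le> j then (if t \<le> \<alpha>!j then 1 else 0) - (if t \<le> \<alpha>!i then 1 else 0) else 0)"
    using ij by (intro prefix_count_swap_entries) auto
  show "prefix_count (swap_entries i j \<alpha>) k t \<le> prefix_count \<beta> k t"
  proof (cases "i < k \<and> k \<le> j \<and> t \<le> \<alpha>!j \<and> \<not> t \<le> \<alpha>!i")
    case False thus ?thesis using cs c0 by auto
  next
    case True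
    hence kk: "i < k" "k \<le> j" "t \<le> \<alpha>!j" "\<alpha>!p < t" and pk: "p \<le> k" using ij by auto
    define u where "u = Suc (\<beta>!p)"
    let ?F = "\<lambda>(s::nat) (\<gamma>::nat list) q. (if s \<le> \<gamma>!q then 1 else 0) :: int"
    have e1: "(\<Sum>q\<in>{p..<k}. ?F t \<alpha> q) = (\<Sum>q\<in>{p..<k}. ?F u \<alpha> q)"
    proof (rule sum.cong)
      fix q assume q: "q \<in> {p..<k}"
      show "?F t \<alpha> q = ?F u \<alpha> q"
      proof (cases "q = p")
        case False
        hence "\<not> (\<alpha>!p < \<alpha>!q \<and> \<alpha>!q \<le> \<beta>!p)" using q kk by (intro gap) auto
        thus ?thesis using kk ij by (auto simp: u_def)
      qed (use kk ij in \<open>auto simp: u_def\<close>)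
    qed simp
    have pin: "p \<in> {p..<k}" using kk ij by auto
    have "(\<Sum>q\<in>{p..<k}-{p}. ?F u \<beta> q) \<le> (\<Sum>q\<in>{p..<k}-{p}. ?F t \<beta> q)"
      by (rule sum_mono) (use kk ij in \<open>auto simp: u_def\<close>)
    moreover have "?F u \<beta> p = 0" "?F t \<beta> p = 1" using kk ij by (auto simp: u_def)
    ultimately have e2: "(\<Sum>q\<in>{p..<k}. ?F u \<beta> q) + 1 \<le> (\<Sum>q\<in>{p..<k}. ?F t \<beta> q)"
      using sum.remove[OF _ pin, of "?F u \<beta>"] sum.remove[OF _ pin, of "?F t \<beta>"] by simp
    have cu: "prefix_count \<alpha> k u \<le> prefix_count \<beta> k u" using D kn by (simp add: tableau_le_def)
    have pp: "prefix_count \<beta> p s = prefix_count \<alpha> p s" for s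
      by (rule prefix_count_cong) (use pre in auto)
    have "prefix_count \<alpha> k t + 1 \<le> prefix_count \<beta> k t"
      using prefix_count_split[OF pk, of \<alpha> t] prefix_count_split[OF pk, of \<beta> t]
        prefix_count_split[OF pk, of \<alpha> u] prefix_count_split[OF pk, of \<beta> u] pp[of t] pp[of u] e1 e2 cu
      by linarith
    thus ?thesis using cs by auto
  qed
qed

text \<open>The gap condition is what makes the swap a single Bruhat cover between the
  minimal permutations.\<close>

lemma tableau_lower_exists_swap:
  assumes \<beta>: "\<beta> \<in> tableau_lower \<alpha>" and ne: "\<beta> \<noteq> \<alpha>"
  obtains i j where "i < j" "j < length \<alpha>" "\<alpha>!i < \<alpha>!j"
    "\<forall>m. i < m \<and> m < j \<longrightarrow> \<alpha>!m \<noteq> \<alpha>!i \<and> \<alpha>!m \<noteq> \<alpha>!j"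
    "\<beta> \<in> tableau_lower (swap_entries i j \<alpha>)"
proof -
  let ?n = "length \<alpha>"
  obtain p q0 where p: "p < q0" "q0 < ?n" "\<forall>r<p. \<beta>!r = \<alpha>!r" "\<alpha>!p < \<beta>!p" "\<alpha>!q0 = \<beta>!p"
    using tableau_lower_first_difference[OF assms] by blast
  define Pj where "Pj q \<longleftrightarrow> p < q \<and> q < ?n \<and> \<alpha>!p < \<alpha>!q \<and> \<alpha>!q \<le> \<beta>!p" for q
  define j where "j = (LEAST q. Pj q)"
  have "Pj q0" using p by (simp add: Pj_def)
  hence jj: "p < j" "j < ?n" "\<alpha>!p < \<alpha>!j" "\<alpha>!j \<le> \<beta>!p"
    using LeastI[of Pj q0] by (auto simp: j_def Pj_def)
  have gap: "\<not> (\<alpha>!p < \<alpha>!m \<and> \<alpha>!m \<le> \<beta>!p)" if "p < m" "m < j" for m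
    using not_less_Least[of m Pj] that jj by (auto simp: j_def Pj_def)
  define I where "I = {q. p \<le> q \<and> q < j \<and> \<alpha>!q = \<alpha>!p}"
  define i where "i = Max I"
  have "finite I" "p \<in> I" using jj by (auto simp: I_def)
  hence "i \<in> I" and imax: "\<And>m. m \<in> I \<Longrightarrow> m \<le> i" unfolding i_def by (auto intro: Max_in)
  hence ii: "p \<le> i" "i < j" "\<alpha>!i = \<alpha>!p" by (auto simp: I_def)
  have "\<alpha>!m \<noteq> \<alpha>!i \<and> \<alpha>!m \<noteq> \<alpha>!j" if "i < m" "m < j" for m
  proof
    show "\<alpha>!m \<noteq> \<alpha>!i" using imax[of m] that ii by (auto simp: I_def)
    show "\<alpha>!m \<noteq> \<alpha>!j" using gap[of m] that ii jj by auto
  qed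
  moreover have "tableau_le \<beta> (swap_entries i j \<alpha>)"
    using \<beta> p(3) ii jj gap by (intro tableau_le_swap_entries_gap) (auto simp: tableau_lower_def)
  ultimately show ?thesis
    using that[of i j] \<beta> ii jj by (auto simp: tableau_lower_def mset_swap_entries)
qed

section \<open>Minimal permutations of compositions\<close>

lemma perm_length_comp_transpose_less:
  assumes ij: "i < j" "j < n" and u: "u i < u j"
  shows "perm_length n u < perm_length n (u \<circ> Transposition.transpose i j)"
proof -
  define \<tau> where "\<tau> = Transposition.transpose i j"
  define invs where "invs w = {(a, b). a < b \<and> b < n \<and> w b < w a}" for w :: "nat \<Rightarrow> nat"
  have fin: "finite (invs w)" for w
    by (rule finite_subset[of _ "{..<n} \<times> {..<n}"]) (auto simp: invs_def)
  txt \<open>Relabelling by \<open>\<tau>\<close>, where this keeps the pair ordered, maps the inversions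
    of \<open>u\<close> injectively to inversions of \<open>u \<circ> \<tau>\<close> other than \<open>(i, j)\<close>.\<close>
  define \<phi> where "\<phi> = (\<lambda>(a, b). if \<tau> a < \<tau> b then (\<tau> a, \<tau> b) else (a, b))"
  have tt: "\<tau> (\<tau> x) = x" for x by (simp add: \<tau>_def)
  have tn: "x < n \<Longrightarrow> \<tau> x < n" for x using ij by (auto simp: \<tau>_def Transposition.transpose_def)
  have img: "\<phi> ` invs u \<subseteq> invs (u \<circ> \<tau>) - {(i, j)}"
  proof
    fix p assume "p \<in> \<phi> ` invs u"
    then obtain a b where p: "p = \<phi> (a, b)" and a: "a < b" "b < n" "u b < u a" by (auto simp: invs_def)
    show "p \<in> invs (u \<circ> \<tau>) - {(i, j)}"
    proof (cases "\<tau> a < \<tau> b")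
      case True
      moreover have "(\<tau> a, \<tau> b) \<noteq> (i, j)"
        using a ij by (auto simp: \<tau>_def Transposition.transpose_def split: if_splits)
      ultimately show ?thesis using p a tn by (auto simp: \<phi>_def invs_def tt)
    next
      case False
      hence "u (\<tau> b) < u (\<tau> a) \<and> (a, b) \<noteq> (i, j)"
        using a ij u unfolding \<tau>_def Transposition.transpose_def by (auto split: if_splits)
      thus ?thesis using False p a by (auto simp: \<phi>_def invs_def)
    qed
  qed
  have inj: "inj_on \<phi> (invs u)"
  proof (rule inj_onI)
    fix p q assume "p \<in> invs u" "q \<in> invs u" "\<phi> p = \<phi> q"
    then obtain a b c d where "p = (a, b)" "a < b" "q = (c, d)" "c < d" "\<phi> (a, b) = \<phi> (c, d)"
      by (auto simp: invs_def)
    moreover have "\<tau> x = \<tau> y \<Longrightarrow> x = y" for x y by (metis tt)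
    ultimately show "p = q" unfolding \<phi>_def by (auto simp: tt split: if_splits)
  qed
  have "(i, j) \<in> invs (u \<circ> \<tau>)" using ij u by (simp add: invs_def \<tau>_def)
  have "card (invs u) \<le> card (invs (u \<circ> \<tau>) - {(i, j)})"
    by (rule card_inj_on_le[OF inj img]) (simp add: fin)
  also have "\<dots> < card (invs (u \<circ> \<tau>))"
    using card_Diff1_less[OF fin \<open>(i, j) \<in> invs (u \<circ> \<tau>)\<close>] .
  finally show ?thesis
    unfolding perm_length_def invs_def[symmetric] \<tau>_def[symmetric] .
qed

lemma length_act [simp]: "length (act v w) = length v"
  by (simp add: act_def)

lemma nth_act: "k < length v \<Longrightarrow> act v w ! k = v ! w k"
  by (simp add: act_def)

lemma act_comp_transpose:
  "i < length v \<Longrightarrow> j < length v \<Longrightarrow>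
   act v (w \<circ> Transposition.transpose i j) = swap_entries i j (act v w)"
proof (rule nth_equalityI)
  fix x assume "i < length v" "j < length v" "x < length (act v (w \<circ> Transposition.transpose i j))"
  moreover hence "Transposition.transpose i j x < length v" by (auto simp: Transposition.transpose_def)
  ultimately show "act v (w \<circ> Transposition.transpose i j) ! x = swap_entries i j (act v w) ! x"
    by (simp add: nth_act nth_swap_entries_transpose)
qed simp

lemma length_lam [simp]: "length (lam \<alpha>) = length \<alpha>"
  by (simp add: lam_def)

lemma mset_lam: "mset (lam \<alpha>) = mset \<alpha>"
  by (simp add: lam_def)

lemma nth_lam_antimono: "a \<le> b \<Longrightarrow> b < length \<alpha> \<Longrightarrow> lam \<alpha> ! b \<le> lam \<alpha> ! a"
  using sorted_rev_nth_mono[of "lam \<alpha>" a b] by (simp add: lam_def)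

lemma lam_eq_iff: "lam \<beta> = lam \<alpha> \<longleftrightarrow> mset \<beta> = mset \<alpha>"
proof
  assume "mset \<beta> = mset \<alpha>"
  hence "sort \<beta> = sort \<alpha>" using properties_for_sort[of "sort \<alpha>" \<beta>] by simp
  thus "lam \<beta> = lam \<alpha>" by (simp add: lam_def)
qed (metis mset_lam)

definition arranging_perm :: "nat list \<Rightarrow> (nat \<Rightarrow> nat) \<Rightarrow> bool" where
  "arranging_perm \<alpha> w \<longleftrightarrow> w permutes {..<length \<alpha>} \<and> act (lam \<alpha>) w = \<alpha>"

definition tie_preserving :: "nat list \<Rightarrow> (nat \<Rightarrow> nat) \<Rightarrow> bool" where
  "tie_preserving \<alpha> w \<longleftrightarrow> (\<forall>k l. k < l \<longrightarrow> l < length \<alpha> \<longrightarrow> \<alpha>!k = \<alpha>!l \<longrightarrow> w k < w l)"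

lemma arranging_perm_nth: "arranging_perm \<alpha> w \<Longrightarrow> k < length \<alpha> \<Longrightarrow> \<alpha> ! k = lam \<alpha> ! w k"
  unfolding arranging_perm_def by (metis length_lam nth_act)

lemma arranging_perm_less: "arranging_perm \<alpha> w \<Longrightarrow> k < length \<alpha> \<Longrightarrow> w k < length \<alpha>"
  unfolding arranging_perm_def by (meson lessThan_iff permutes_in_image)

lemma tie_preserving_arranging_perm_less_iff:
  assumes w: "arranging_perm \<alpha> w" and t: "tie_preserving \<alpha> w"
    and j: "j < length \<alpha>" and k: "k < length \<alpha>"
  shows "w j < w k \<longleftrightarrow> \<alpha>!k < \<alpha>!j \<or> (\<alpha>!j = \<alpha>!k \<and> j < k)"
proof
  have wj: "w j < length \<alpha>" and wk: "w k < length \<alpha>" using arranging_perm_less[OF w] j k by auto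
  have aj: "\<alpha>!j = lam \<alpha> ! w j" and ak: "\<alpha>!k = lam \<alpha> ! w k"
    using arranging_perm_nth[OF w] j k by auto
  {
    assume lt: "w j < w k"
    hence "\<alpha>!k \<le> \<alpha>!j" using nth_lam_antimono[of "w j" "w k" \<alpha>] wk aj ak by simp
    moreover have "\<not> k < j" if "\<alpha>!j = \<alpha>!k"
      using t that j lt unfolding tie_preserving_def by (metis less_asym)
    moreover have "j \<noteq> k" using lt by auto
    ultimately show "\<alpha>!k < \<alpha>!j \<or> (\<alpha>!j = \<alpha>!k \<and> j < k)" by linarith
  }
  assume "\<alpha>!k < \<alpha>!j \<or> (\<alpha>!j = \<alpha>!k \<and> j < k)"
  thus "w j < w k"
  proof
    assume "\<alpha>!k < \<alpha>!j"
    moreover have "\<alpha>!j \<le> \<alpha>!k" if "w k \<le> w j"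
      using nth_lam_antimono[OF that wj] aj ak by simp
    ultimately show "w j < w k" by linarith
  next
    assume "\<alpha>!j = \<alpha>!k \<and> j < k"
    thus "w j < w k" using t k unfolding tie_preserving_def by auto
  qed
qed

text \<open>The value is the position of \<open>\<alpha>!k\<close> in the stable decreasing sort of \<open>\<alpha>\<close>.\<close>

lemma tie_preserving_arranging_perm_eq_card:
  assumes w: "arranging_perm \<alpha> w" and t: "tie_preserving \<alpha> w" and k: "k < length \<alpha>"
  shows "w k = card {j. j < length \<alpha> \<and> (\<alpha>!k < \<alpha>!j \<or> (\<alpha>!j = \<alpha>!k \<and> j < k))}"
proof -
  let ?n = "length \<alpha>"
  have p: "w permutes {..<?n}" using w by (simp add: arranging_perm_def)
  define S where "S = {j. j < ?n \<and> w j < w k}"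
  have wk: "w k < ?n" using arranging_perm_less[OF w k] .
  have "w ` S = {..<w k}"
  proof
    show "{..<w k} \<subseteq> w ` S"
    proof
      fix r assume r: "r \<in> {..<w k}"
      hence "r \<in> w ` {..<?n}" using permutes_image[OF p] wk by auto
      thus "r \<in> w ` S" using r by (auto simp: S_def)
    qed
  qed (auto simp: S_def)
  moreover have "inj_on w S" using permutes_inj[OF p] by (simp add: inj_on_def)
  ultimately have "card S = w k" by (metis card_image card_lessThan)
  moreover have "S = {j. j < ?n \<and> (\<alpha>!k < \<alpha>!j \<or> (\<alpha>!j = \<alpha>!k \<and> j < k))}"
    unfolding S_def using tie_preserving_arranging_perm_less_iff[OF w t _ k] by blast
  ultimately show ?thesis by simp
qed

lemma tie_preserving_arranging_perm_unique:
  assumes "arranging_perm \<alpha> w1" "tie_preserving \<alpha> w1" "arranging_perm \<alpha> w2" "tie_preserving \<alpha> w2"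
  shows "w1 = w2"
proof
  fix x show "w1 x = w2 x"
  proof (cases "x < length \<alpha>")
    case True
    thus ?thesis using tie_preserving_arranging_perm_eq_card[OF assms(1,2)]
        tie_preserving_arranging_perm_eq_card[OF assms(3,4)] by simp
  next
    case False
    have "w1 permutes {..<length \<alpha>}" "w2 permutes {..<length \<alpha>}"
      using assms by (auto simp: arranging_perm_def)
    thus ?thesis using False by (simp add: permutes_not_in)
  qed
qed

lemma comp_transpose_transpose [simp]:
  "(w \<circ> Transposition.transpose i j) \<circ> Transposition.transpose i j = w"
  by (simp flip: o_assoc add: transpose_comp_involutory)

lemma arranging_perm_shorter:
  assumes w: "arranging_perm \<alpha> w" and nt: "\<not> tie_preserving \<alpha> w"
  obtains w' where "arranging_perm \<alpha> w'" "perm_length (length \<alpha>) w' < perm_length (length \<alpha>) w"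
proof -
  let ?n = "length \<alpha>"
  obtain k l where kl: "k < l" "l < ?n" "\<alpha>!k = \<alpha>!l" "\<not> w k < w l"
    using nt by (auto simp: tie_preserving_def)
  have p: "w permutes {..<?n}" using w by (simp add: arranging_perm_def)
  have "w k \<noteq> w l" using permutes_inj[OF p] kl by (metis injD less_irrefl)
  hence wlk: "w l < w k" using kl by auto
  define w' where "w' = w \<circ> Transposition.transpose k l"
  have "w' permutes {..<?n}" unfolding w'_def
    using kl by (intro permutes_compose[OF _ p] permutes_swap_id) auto
  moreover have "act (lam \<alpha>) w' = \<alpha>" unfolding w'_def using kl w
    by (simp add: act_comp_transpose arranging_perm_def swap_entries_eq_self)
  moreover have "perm_length ?n w' < perm_length ?n (w' \<circ> Transposition.transpose k l)"
    using kl wlk by (intro perm_length_comp_transpose_less) (auto simp: w'_def)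
  ultimately show ?thesis using that[of w'] by (simp add: arranging_perm_def w'_def)
qed

lemma wperm_arranging_tie_preserving:
  "arranging_perm \<alpha> (wperm \<alpha>) \<and> tie_preserving \<alpha> (wperm \<alpha>)"
proof -
  let ?n = "length \<alpha>"
  define P where "P w \<longleftrightarrow> arranging_perm \<alpha> w \<and>
    (\<forall>u. arranging_perm \<alpha> u \<longrightarrow> perm_length ?n w \<le> perm_length ?n u)" for w
  obtain p where "p permutes {..<length (lam \<alpha>)}" "permute_list p (lam \<alpha>) = \<alpha>"
    using mset_eq_permutation[of \<alpha> "lam \<alpha>"] mset_lam by metis
  hence "arranging_perm \<alpha> p" by (simp add: arranging_perm_def act_def permute_list_def)
  then obtain w0 where "P w0"
    using ex_has_least_nat[of "arranging_perm \<alpha>" p "perm_length ?n"] by (auto simp: P_def)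
  have Pt: "tie_preserving \<alpha> w" if Pw: "P w" for w
  proof (rule ccontr)
    assume "\<not> tie_preserving \<alpha> w"
    then obtain w' where "arranging_perm \<alpha> w'" "perm_length ?n w' < perm_length ?n w"
      using arranging_perm_shorter Pw unfolding P_def by blast
    thus False using Pw unfolding P_def by (meson leD)
  qed
  have "\<exists>!w. P w"
  proof (rule ex_ex1I)
    show "\<exists>w. P w" using \<open>P w0\<close> by blast
  next
    fix a b assume "P a" "P b"
    thus "a = b" using Pt tie_preserving_arranging_perm_unique unfolding P_def by blast
  qed
  moreover have "wperm \<alpha> = (THE w. P w)"
    unfolding wperm_def P_def arranging_perm_def by simp
  ultimately have "P (wperm \<alpha>)" by (simp add: theI')
  thus ?thesis using Pt by (simp add: P_def)
qed

lemma wperm_eqI: "arranging_perm \<alpha> w \<Longrightarrow> tie_preserving \<alpha> w \<Longrightarrow> wperm \<alpha> = w"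
  using wperm_arranging_tie_preserving tie_preserving_arranging_perm_unique by blast

lemma transpose_less_transpose_of_tie:
  assumes ij: "i < j" and kl: "k < l" "\<alpha>!k = \<alpha>!l" and d: "\<alpha>!i \<noteq> \<alpha>!j"
    and gap: "\<forall>m. i < m \<and> m < j \<longrightarrow> \<alpha>!m \<noteq> \<alpha>!i \<and> \<alpha>!m \<noteq> \<alpha>!j"
  shows "Transposition.transpose i j k < Transposition.transpose i j l"
proof -
  have outside: "\<not> (i < m \<and> m < j)" if "\<alpha>!m = \<alpha>!i \<or> \<alpha>!m = \<alpha>!j" for m
    using gap that by auto
  consider "k = i" | "k = j" | "l = i" | "l = j" | "k \<noteq> i" "k \<noteq> j" "l \<noteq> i" "l \<noteq> j" by blast
  thus ?thesis
  proof cases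
    case 1
    hence "l \<noteq> j" "\<not> (i < l \<and> l < j)" using outside[of l] kl d by auto
    thus ?thesis using 1 kl ij by (auto simp: Transposition.transpose_def)
  next
    case 4
    hence "k \<noteq> i" "\<not> (i < k \<and> k < j)" using outside[of k] kl d by auto
    thus ?thesis using 4 kl ij by (auto simp: Transposition.transpose_def)
  qed (use kl ij in \<open>auto simp: Transposition.transpose_def\<close>)
qed

lemma wperm_swap_entries:
  assumes ij: "i < j" "j < length \<alpha>" "\<alpha>!i \<noteq> \<alpha>!j"
    and gap: "\<forall>m. i < m \<and> m < j \<longrightarrow> \<alpha>!m \<noteq> \<alpha>!i \<and> \<alpha>!m \<noteq> \<alpha>!j"
  shows "wperm \<alpha> = wperm (swap_entries i j \<alpha>) \<circ> Transposition.transpose i j"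
proof (rule wperm_eqI)
  let ?n = "length \<alpha>" and ?\<alpha>' = "swap_entries i j \<alpha>" and ?\<tau> = "Transposition.transpose i j"
  let ?w' = "wperm ?\<alpha>'"
  have lam: "lam ?\<alpha>' = lam \<alpha>" using ij by (simp add: lam_eq_iff mset_swap_entries)
  have w': "arranging_perm ?\<alpha>' ?w'" "tie_preserving ?\<alpha>' ?w'"
    using wperm_arranging_tie_preserving by auto
  hence "?w' permutes {..<?n}" by (simp add: arranging_perm_def)
  hence "?w' \<circ> ?\<tau> permutes {..<?n}"
    using ij by (intro permutes_compose permutes_swap_id) auto
  moreover have "act (lam \<alpha>) (?w' \<circ> ?\<tau>) = \<alpha>"
    using w' ij lam by (simp add: act_comp_transpose arranging_perm_def)
  ultimately show "arranging_perm \<alpha> (?w' \<circ> ?\<tau>)" by (simp add: arranging_perm_def)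
  have \<alpha>'\<tau>: "?\<alpha>' ! (?\<tau> x) = \<alpha> ! x" for x
    using ij by (simp add: nth_swap_entries_transpose transpose_involutory)
  have \<tau>n: "x < ?n \<Longrightarrow> ?\<tau> x < ?n" for x using ij by (auto simp: Transposition.transpose_def)
  show "tie_preserving \<alpha> (?w' \<circ> ?\<tau>)"
    unfolding tie_preserving_def
  proof (intro allI impI)
    fix k l assume kl: "k < l" "l < ?n" "\<alpha>!k = \<alpha>!l"
    have "?\<tau> k < ?\<tau> l" using transpose_less_transpose_of_tie[OF ij(1) kl(1,3) ij(3) gap] .
    moreover have "?\<alpha>' ! (?\<tau> k) = ?\<alpha>' ! (?\<tau> l)" using kl \<alpha>'\<tau> by simp
    ultimately show "(?w' \<circ> ?\<tau>) k < (?w' \<circ> ?\<tau>) l"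
      using w'(2) \<tau>n kl unfolding tie_preserving_def by simp
  qed
qed

lemma perm_length_wperm_swap_entries_less:
  assumes ij: "i < j" "j < length \<alpha>" "\<alpha>!i < \<alpha>!j"
    and gap: "\<forall>m. i < m \<and> m < j \<longrightarrow> \<alpha>!m \<noteq> \<alpha>!i \<and> \<alpha>!m \<noteq> \<alpha>!j"
  shows "perm_length (length \<alpha>) (wperm (swap_entries i j \<alpha>)) < perm_length (length \<alpha>) (wperm \<alpha>)"
proof -
  let ?\<alpha>' = "swap_entries i j \<alpha>"
  let ?w' = "wperm ?\<alpha>'"
  have lam: "lam ?\<alpha>' = lam \<alpha>" using ij by (simp add: lam_eq_iff mset_swap_entries)
  have w': "arranging_perm ?\<alpha>' ?w'" using wperm_arranging_tie_preserving by auto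
  have "?w' i < ?w' j"
  proof (rule ccontr)
    assume "\<not> ?w' i < ?w' j"
    hence "lam \<alpha> ! ?w' i \<le> lam \<alpha> ! ?w' j"
      using nth_lam_antimono arranging_perm_less[OF w'] ij lam by auto
    moreover have "?\<alpha>' ! i = lam \<alpha> ! ?w' i" "?\<alpha>' ! j = lam \<alpha> ! ?w' j"
      using arranging_perm_nth[OF w'] ij lam by auto
    ultimately show False using ij by (auto simp: nth_swap_entries)
  qed
  hence "perm_length (length \<alpha>) ?w' < perm_length (length \<alpha>) (?w' \<circ> Transposition.transpose i j)"
    using ij by (intro perm_length_comp_transpose_less) auto
  thus ?thesis using wperm_swap_entries[OF ij(1,2) _ gap] ij(3) by simp
qed

section \<open>The Bruhat order is the tableau order\<close>

lemma tableau_le_of_bruhat_chain: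
  assumes "(bruhat_cover n)\<^sup>*\<^sup>* u v" and u: "u ` {..<n} \<subseteq> {..<n}"
    and xs: "length xs = n" "\<And>a b. a \<le> b \<Longrightarrow> b < n \<Longrightarrow> xs!b \<le> xs!a"
  shows "tableau_le (act xs u) (act xs v) \<and> v ` {..<n} \<subseteq> {..<n}"
  using assms(1)
proof (induction rule: rtranclp_induct)
  case base thus ?case using u by (simp add: tableau_le_refl)
next
  case (step v v')
  from step.hyps(2) obtain i j where ij: "i < j" "j < n" and v': "v' = v \<circ> Transposition.transpose i j"
    and pl: "perm_length n v < perm_length n v'"
    unfolding bruhat_cover_def by blast
  have vn: "v ` {..<n} \<subseteq> {..<n}" using step.IH by simp
  have "v i \<le> v j"
  proof (rule ccontr)
    assume "\<not> v i \<le> v j"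
    hence "perm_length n v' < perm_length n (v' \<circ> Transposition.transpose i j)"
      using ij v' by (intro perm_length_comp_transpose_less) auto
    thus False using pl v' by simp
  qed
  moreover have "v j < n" using vn ij by auto
  ultimately have "xs ! v j \<le> xs ! v i" using xs by simp
  hence "tableau_le (act xs v) (act xs v')"
    using ij xs v' by (auto simp: act_comp_transpose nth_act intro: tableau_le_swap_entries)
  hence "tableau_le (act xs u) (act xs v')" using step.IH tableau_le_trans xs by (metis length_act)
  moreover have "v' ` {..<n} \<subseteq> {..<n}"
    using vn ij v' by (auto simp: Transposition.transpose_def image_subset_iff)
  ultimately show ?case by simp
qed

lemma bruhat_chain_of_tableau_lower:
  "\<beta> \<in> tableau_lower \<alpha> \<Longrightarrow> (bruhat_cover (length \<alpha>))\<^sup>*\<^sup>* (wperm \<beta>) (wperm \<alpha>)"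
proof (induction "perm_length (length \<alpha>) (wperm \<alpha>)" arbitrary: \<alpha> rule: less_induct)
  case less
  show ?case
  proof (cases "\<beta> = \<alpha>")
    case False
    then obtain i j where ij: "i < j" "j < length \<alpha>" "\<alpha>!i < \<alpha>!j"
      and gap: "\<forall>m. i < m \<and> m < j \<longrightarrow> \<alpha>!m \<noteq> \<alpha>!i \<and> \<alpha>!m \<noteq> \<alpha>!j"
      and \<beta>: "\<beta> \<in> tableau_lower (swap_entries i j \<alpha>)"
      using tableau_lower_exists_swap[OF less.prems] by blast
    let ?\<alpha>' = "swap_entries i j \<alpha>"
    have shorter: "perm_length (length \<alpha>) (wperm ?\<alpha>') < perm_length (length \<alpha>) (wperm \<alpha>)"
      using perm_length_wperm_swap_entries_less[OF ij gap] .
    hence "(bruhat_cover (length \<alpha>))\<^sup>*\<^sup>* (wperm \<beta>) (wperm ?\<alpha>')"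
      using less.hyps[of ?\<alpha>'] \<beta> by simp
    moreover have "bruhat_cover (length \<alpha>) (wperm ?\<alpha>') (wperm \<alpha>)"
      unfolding bruhat_cover_def using ij shorter wperm_swap_entries[OF ij(1,2) _ gap] by auto
    ultimately show ?thesis by simp
  qed simp
qed

lemma comp_le_iff_tableau_lower: "comp_le \<beta> \<alpha> \<longleftrightarrow> \<beta> \<in> tableau_lower \<alpha>"
proof
  assume "comp_le \<beta> \<alpha>"
  hence len: "length \<beta> = length \<alpha>" and ms: "mset \<beta> = mset \<alpha>" and lm: "lam \<beta> = lam \<alpha>"
    and p: "wperm \<beta> permutes {..<length \<alpha>}"
    and ch: "(bruhat_cover (length \<alpha>))\<^sup>*\<^sup>* (wperm \<beta>) (wperm \<alpha>)"
    by (auto simp: comp_le_def bruhat_le_def lam_eq_iff)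
  have "tableau_le (act (lam \<alpha>) (wperm \<beta>)) (act (lam \<alpha>) (wperm \<alpha>))"
    using tableau_le_of_bruhat_chain[OF ch, of "lam \<alpha>"] permutes_image[OF p] nth_lam_antimono by auto
  moreover have "act (lam \<alpha>) (wperm \<alpha>) = \<alpha>" "act (lam \<alpha>) (wperm \<beta>) = \<beta>"
    using wperm_arranging_tie_preserving[of \<alpha>] wperm_arranging_tie_preserving[of \<beta>] lm
    by (auto simp: arranging_perm_def)
  ultimately show "\<beta> \<in> tableau_lower \<alpha>" using len ms by (simp add: tableau_lower_def)
next
  assume \<beta>: "\<beta> \<in> tableau_lower \<alpha>"
  hence "length \<beta> = length \<alpha>" "mset \<beta> = mset \<alpha>" by (auto simp: tableau_lower_def)
  moreover have "wperm \<beta> permutes {..<length \<beta>}" "wperm \<alpha> permutes {..<length \<alpha>}"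
    using wperm_arranging_tie_preserving by (auto simp: arranging_perm_def)
  ultimately show "comp_le \<beta> \<alpha>" using bruhat_chain_of_tableau_lower[OF \<beta>]
    by (simp add: comp_le_def bruhat_le_def lam_eq_iff)
qed

text \<open>Along an ascent \<open>\<alpha>!i < \<alpha>!(i+1)\<close>, with \<open>\<alpha>' = s\<^sub>i \<alpha>\<close>, we have
  \<open>tableau_lower \<alpha> = tableau_lower \<alpha>' \<union> s\<^sub>i ` tableau_lower \<alpha>'\<close>, and an element of the
  left side lies in \<open>tableau_lower \<alpha>'\<close> itself unless it has an ascent at \<open>i\<close>.\<close>

lemma tableau_lower_swap_ascent_subset:
  assumes n: "Suc i < length \<alpha>" and a: "\<alpha>!i < \<alpha>!Suc i"
    and \<beta>: "\<beta> \<in> tableau_lower (swap_entries i (Suc i) \<alpha>)"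
  shows "\<beta> \<in> tableau_lower \<alpha>"
proof -
  have "tableau_le \<beta> \<alpha>" unfolding tableau_le_def
  proof (intro allI impI)
    fix k t assume k: "k \<le> length \<alpha>"
    have "prefix_count (swap_entries i (Suc i) \<alpha>) k t \<le> prefix_count \<beta> k t"
      using \<beta> k by (simp add: tableau_lower_def tableau_le_def)
    thus "prefix_count \<alpha> k t \<le> prefix_count \<beta> k t"
      using prefix_count_swap_adjacent[OF n, of k t] a by (auto split: if_splits)
  qed
  thus ?thesis using \<beta> n by (simp add: tableau_lower_def mset_swap_entries)
qed

lemma swap_mem_tableau_lower_of_swap_ascent:
  assumes n: "Suc i < length \<alpha>" and a: "\<alpha>!i < \<alpha>!Suc i"
    and \<beta>: "\<beta> \<in> tableau_lower (swap_entries i (Suc i) \<alpha>)"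
  shows "swap_entries i (Suc i) \<beta> \<in> tableau_lower \<alpha>"
proof -
  have D: "tableau_le \<beta> (swap_entries i (Suc i) \<alpha>)" and len: "length \<beta> = length \<alpha>"
    using \<beta> by (auto simp: tableau_lower_def)
  have nb: "Suc i < length \<beta>" using n len by simp
  have D2: "tableau_le \<beta> \<alpha>"
    using tableau_lower_swap_ascent_subset[OF assms] by (simp add: tableau_lower_def)
  have "tableau_le (swap_entries i (Suc i) \<beta>) \<alpha>" unfolding tableau_le_def
  proof (intro allI impI)
    fix k t assume k: "k \<le> length \<alpha>"
    show "prefix_count \<alpha> k t \<le> prefix_count (swap_entries i (Suc i) \<beta>) k t"
    proof (cases "k = Suc i")
      case False thus ?thesis using prefix_count_swap_adjacent[OF nb] D2 k by (simp add: tableau_le_def)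
    next
      case True
      have "prefix_count (swap_entries i (Suc i) \<alpha>) i t \<le> prefix_count \<beta> i t"
        "prefix_count (swap_entries i (Suc i) \<alpha>) (Suc (Suc i)) t \<le> prefix_count \<beta> (Suc (Suc i)) t"
        using D n by (simp_all add: tableau_le_def)
      thus ?thesis using True prefix_count_swap_adjacent[OF n, of i t]
          prefix_count_swap_adjacent[OF n, of "Suc (Suc i)" t] prefix_count_swap_adjacent[OF nb, of k t] a
        by (auto simp: prefix_count_Suc split: if_splits)
    qed
  qed
  thus ?thesis using \<beta> nb by (simp add: tableau_lower_def mset_swap_entries)
qed

lemma mem_tableau_lower_swap_ascent:
  assumes n: "Suc i < length \<alpha>" and a: "\<alpha>!i < \<alpha>!Suc i"
    and \<gamma>: "\<gamma> \<in> tableau_lower \<alpha>" and g: "\<gamma>!Suc i \<le> \<gamma>!i"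
  shows "\<gamma> \<in> tableau_lower (swap_entries i (Suc i) \<alpha>)"
proof -
  have D: "tableau_le \<gamma> \<alpha>" using \<gamma> by (simp add: tableau_lower_def)
  have "tableau_le \<gamma> (swap_entries i (Suc i) \<alpha>)" unfolding tableau_le_def
  proof (intro allI impI)
    fix k t assume "k \<le> length (swap_entries i (Suc i) \<alpha>)"
    hence k: "k \<le> length \<alpha>" by simp
    show "prefix_count (swap_entries i (Suc i) \<alpha>) k t \<le> prefix_count \<gamma> k t"
    proof (cases "k = Suc i")
      case False thus ?thesis using prefix_count_swap_adjacent[OF n] D k by (simp add: tableau_le_def)
    next
      case True
      have "prefix_count \<alpha> i t \<le> prefix_count \<gamma> i t"
        "prefix_count \<alpha> (Suc (Suc i)) t \<le> prefix_count \<gamma> (Suc (Suc i)) t"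
        using D n by (simp_all add: tableau_le_def)
      thus ?thesis using True prefix_count_swap_adjacent[OF n, of k t] a g
        by (auto simp: prefix_count_Suc split: if_splits)
    qed
  qed
  thus ?thesis using \<gamma> n by (simp add: tableau_lower_def mset_swap_entries)
qed

lemma swap_mem_tableau_lower_swap_ascent:
  assumes n: "Suc i < length \<alpha>" and a: "\<alpha>!i < \<alpha>!Suc i"
    and \<gamma>: "\<gamma> \<in> tableau_lower \<alpha>" and g: "\<gamma>!i < \<gamma>!Suc i"
  shows "swap_entries i (Suc i) \<gamma> \<in> tableau_lower (swap_entries i (Suc i) \<alpha>)"
proof -
  have D: "tableau_le \<gamma> \<alpha>" and len: "length \<gamma> = length \<alpha>" using \<gamma> by (auto simp: tableau_lower_def)
  have ng: "Suc i < length \<gamma>" using n len by simp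
  have "tableau_le (swap_entries i (Suc i) \<gamma>) (swap_entries i (Suc i) \<alpha>)" unfolding tableau_le_def
  proof (intro allI impI)
    fix k t assume "k \<le> length (swap_entries i (Suc i) \<alpha>)"
    hence k: "k \<le> length \<alpha>" by simp
    show "prefix_count (swap_entries i (Suc i) \<alpha>) k t \<le> prefix_count (swap_entries i (Suc i) \<gamma>) k t"
    proof (cases "k = Suc i")
      case False
      thus ?thesis using prefix_count_swap_adjacent[OF n] prefix_count_swap_adjacent[OF ng] D k
        by (simp add: tableau_le_def)
    next
      case True
      have "prefix_count \<alpha> i t \<le> prefix_count \<gamma> i t"
        "prefix_count \<alpha> (Suc (Suc i)) t \<le> prefix_count \<gamma> (Suc (Suc i)) t"
        using D n by (simp_all add: tableau_le_def)
      thus ?thesis using True prefix_count_swap_adjacent[OF n, of k t]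
          prefix_count_swap_adjacent[OF ng, of k t] a g
        by (auto simp: prefix_count_Suc split: if_splits)
    qed
  qed
  thus ?thesis using \<gamma> n len by (simp add: tableau_lower_def mset_swap_entries)
qed

section \<open>Permuting variables\<close>

abbreviation mon :: "(nat \<Rightarrow>\<^sub>0 nat) \<Rightarrow> mpoly" where
  "mon m \<equiv> Poly_Mapping.single m 1"

lemma poly_mapping_sum_single: "(\<Sum>m\<in>Poly_Mapping.keys p. Poly_Mapping.single m (Poly_Mapping.lookup p m)) = p"
proof (rule poly_mapping_eqI)
  fix k
  show "Poly_Mapping.lookup (\<Sum>m\<in>Poly_Mapping.keys p. Poly_Mapping.single m (Poly_Mapping.lookup p m)) k =
      Poly_Mapping.lookup p k"
    by (simp add: lookup_sum lookup_single when_def sum.delta in_keys_iff flip: sum.inter_filter)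
qed

lemma lookup_single_0_mult:
  "Poly_Mapping.lookup (Poly_Mapping.single 0 c * (p::mpoly)) k = c * Poly_Mapping.lookup p k"
  by (simp add: mult_map_scale_conv_mult[symmetric] map.rep_eq when_def)

lemma mpoly_mult_expand:
  "(f::mpoly) * g = (\<Sum>a\<in>Poly_Mapping.keys f. \<Sum>b\<in>Poly_Mapping.keys g.
     Poly_Mapping.single (a + b) (Poly_Mapping.lookup f a * Poly_Mapping.lookup g b))"
  by (subst (1 2) poly_mapping_sum_single[symmetric]) (simp add: sum_product mult_single)

lemma lookup_swap_exp:
  "Poly_Mapping.lookup (swap_exp i m) k = Poly_Mapping.lookup m (Transposition.transpose i (Suc i) k)"
  by (simp add: swap_exp_def map_key.rep_eq[OF inj_transpose])

lemma swap_exp_swap_exp [simp]: "swap_exp i (swap_exp i m) = m"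
  by (rule poly_mapping_eqI) (simp add: lookup_swap_exp transpose_involutory)

lemma inj_swap_exp: "inj (swap_exp i)"
  by (metis injI swap_exp_swap_exp)

lemma swap_exp_add: "swap_exp i (m + m') = swap_exp i m + swap_exp i m'"
  by (rule poly_mapping_eqI) (simp add: lookup_swap_exp lookup_add)

lemma swap_exp_single:
  "swap_exp i (Poly_Mapping.single j a) = Poly_Mapping.single (Transposition.transpose i (Suc i) j) a"
  by (rule poly_mapping_eqI)
    (auto simp: lookup_swap_exp lookup_single when_def Transposition.transpose_def)

lemma swap_exp_commute: "Suc i < j \<Longrightarrow> swap_exp j (swap_exp i m) = swap_exp i (swap_exp j m)"
  by (rule poly_mapping_eqI) (auto simp: lookup_swap_exp Transposition.transpose_def)

lemma swap_exp_braid: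
  "swap_exp i (swap_exp (Suc i) (swap_exp i m)) = swap_exp (Suc i) (swap_exp i (swap_exp (Suc i) m))"
  by (rule poly_mapping_eqI) (auto simp: lookup_swap_exp Transposition.transpose_def)

lemma lookup_swapvar: "Poly_Mapping.lookup (swapvar i f) m = Poly_Mapping.lookup f (swap_exp i m)"
  by (simp add: swapvar_def map_key.rep_eq[OF inj_swap_exp])

lemma swapvar_single: "swapvar i (Poly_Mapping.single m c) = Poly_Mapping.single (swap_exp i m) c"
proof (rule poly_mapping_eqI)
  fix k
  have "m = swap_exp i k \<longleftrightarrow> swap_exp i m = k" by auto
  thus "Poly_Mapping.lookup (swapvar i (Poly_Mapping.single m c)) k =
      Poly_Mapping.lookup (Poly_Mapping.single (swap_exp i m) c) k"
    by (simp add: lookup_swapvar lookup_single when_def)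
qed

lemma swapvar_diff: "swapvar i (f - g) = swapvar i f - swapvar i g"
  by (rule poly_mapping_eqI) (simp add: lookup_swapvar lookup_minus)

lemma swapvar_sum: "swapvar i (sum F A) = (\<Sum>x\<in>A. swapvar i (F x))"
  by (rule poly_mapping_eqI) (simp add: lookup_swapvar lookup_sum)

lemma swapvar_swapvar [simp]: "swapvar i (swapvar i f) = f"
  by (rule poly_mapping_eqI) (simp add: lookup_swapvar)

lemma swapvar_expand:
  "swapvar i f = (\<Sum>m\<in>Poly_Mapping.keys f. Poly_Mapping.single (swap_exp i m) (Poly_Mapping.lookup f m))"
  by (subst (1) poly_mapping_sum_single[symmetric]) (simp add: swapvar_sum swapvar_single)

lemma swapvar_mult: "swapvar i (f * g) = swapvar i f * swapvar i g"
proof -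
  have "swapvar i (f * g) = (\<Sum>a\<in>Poly_Mapping.keys f. \<Sum>b\<in>Poly_Mapping.keys g.
      Poly_Mapping.single (swap_exp i a + swap_exp i b) (Poly_Mapping.lookup f a * Poly_Mapping.lookup g b))"
    by (simp add: mpoly_mult_expand swapvar_sum swapvar_single swap_exp_add)
  also have "\<dots> = swapvar i f * swapvar i g"
    by (simp add: swapvar_expand sum_product mult_single)
  finally show ?thesis .
qed

lemma swapvar_var: "swapvar i (var j) = var (Transposition.transpose i (Suc i) j)"
  by (simp add: var_def swapvar_single swap_exp_single)

lemma swapvar_var_self [simp]: "swapvar i (var i) = var (Suc i)"
  and swapvar_var_Suc [simp]: "swapvar i (var (Suc i)) = var i"
  by (simp_all add: swapvar_var)

lemma swapvar_var_other: "j \<noteq> i \<Longrightarrow> j \<noteq> Suc i \<Longrightarrow> swapvar i (var j) = var j"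
  by (simp add: swapvar_var Transposition.transpose_def)

lemma swapvar_commute: "Suc i < j \<Longrightarrow> swapvar i (swapvar j f) = swapvar j (swapvar i f)"
  by (rule poly_mapping_eqI) (simp add: lookup_swapvar swap_exp_commute)

lemma swapvar_braid:
  "swapvar i (swapvar (Suc i) (swapvar i f)) = swapvar (Suc i) (swapvar i (swapvar (Suc i) f))"
  by (rule poly_mapping_eqI) (simp add: lookup_swapvar swap_exp_braid)

lemma var_power: "var j ^ k = mon (Poly_Mapping.single j k)"
proof (induction k)
  case (Suc k)
  have "Poly_Mapping.single j (Suc k) = Poly_Mapping.single j 1 + Poly_Mapping.single j k"
    by (simp flip: single_add)
  thus ?case using Suc by (simp add: var_def mult_single)
qed simp

lemma var_diff_nonzero: "i \<noteq> j \<Longrightarrow> var i - var j \<noteq> (0::mpoly)"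
  by (metis lookup_single_eq lookup_single_not_eq var_def zero_neq_one diff_eq_diff_eq
      diff_self)

section \<open>Demazure operators\<close>

lemma diff_mult_sum_powers_ge:
  fixes x y :: "'a::comm_ring_1"
  assumes "b \<le> a"
  shows "(x - y) * (\<Sum>k\<in>{b..a}. x^k * y^(a+b-k)) = x^(Suc a) * y^b - x^b * y^(Suc a)"
  using assms
proof (induction a rule: dec_induct)
  case base thus ?case by (simp add: algebra_simps)
next
  case (step n)
  have "(\<Sum>k\<in>{b..n}. x^k * y^(Suc n + b - k)) = y * (\<Sum>k\<in>{b..n}. x^k * y^(n + b - k))"
    unfolding sum_distrib_left
  proof (rule sum.cong)
    fix k assume "k \<in> {b..n}"
    hence "Suc n + b - k = Suc (n + b - k)" by auto
    thus "x^k * y^(Suc n + b - k) = y * (x^k * y^(n + b - k))" by (simp add: algebra_simps)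
  qed simp
  moreover have "(\<Sum>k\<in>{b..Suc n}. x^k * y^(Suc n + b - k)) =
      (\<Sum>k\<in>{b..n}. x^k * y^(Suc n + b - k)) + x^(Suc n) * y^b"
    using step by (simp add: sum.cl_ivl_Suc)
  ultimately have "(x - y) * (\<Sum>k\<in>{b..Suc n}. x^k * y^(Suc n + b - k)) =
      y * ((x - y) * (\<Sum>k\<in>{b..n}. x^k * y^(n + b - k))) + (x - y) * x^(Suc n) * y^b"
    by (simp add: algebra_simps)
  also have "\<dots> = y * (x^(Suc n) * y^b - x^b * y^(Suc n)) + (x - y) * x^(Suc n) * y^b"
    using step by simp
  also have "\<dots> = x^(Suc (Suc n)) * y^b - x^b * y^(Suc (Suc n))"
    by (simp add: algebra_simps)
  finally show ?case .
qed

lemma diff_mult_sum_powers: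
  fixes x y :: "'a::comm_ring_1"
  shows "(x - y) * ((\<Sum>k\<in>{b..a}. x^k * y^(a+b-k)) - (\<Sum>k\<in>{a<..<b}. x^k * y^(a+b-k)))
     = x * (x^a * y^b) - y * (x^b * y^a)"
proof (cases "b \<le> a")
  case True
  hence "{a<..<b} = {}" by auto
  thus ?thesis using diff_mult_sum_powers_ge[OF True, of x y] by (simp add: algebra_simps)
next
  case False
  hence "{b..a} = {}" by auto
  moreover have "(\<Sum>k\<in>{a<..<b}. x^k * y^(a+b-k)) = (\<Sum>k\<in>{Suc a..b-1}. x^k * y^((b-1) + Suc a - k))"
    using False by (intro sum.cong) (auto simp: add.commute)
  moreover have "(x - y) * (\<Sum>k\<in>{Suc a..b-1}. x^k * y^((b-1) + Suc a - k)) = x^b * y^(Suc a) - x^(Suc a) * y^b"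
  proof (cases "b = Suc a")
    case False
    hence "Suc a \<le> b - 1" using \<open>\<not> b \<le> a\<close> by simp
    thus ?thesis using diff_mult_sum_powers_ge[of "Suc a" "b - 1" x y] \<open>\<not> b \<le> a\<close> by simp
  qed simp
  ultimately show ?thesis by (simp add: algebra_simps)
qed

definition redistribute_exp :: "nat \<Rightarrow> (nat \<Rightarrow>\<^sub>0 nat) \<Rightarrow> nat \<Rightarrow> (nat \<Rightarrow>\<^sub>0 nat)" where
  "redistribute_exp i m k = Poly_Mapping.update i k
     (Poly_Mapping.update (Suc i) (Poly_Mapping.lookup m i + Poly_Mapping.lookup m (Suc i) - k) m)"

lemma lookup_redistribute_exp:
  "Poly_Mapping.lookup (redistribute_exp i m k) x =
   (if x = i then k else if x = Suc i then Poly_Mapping.lookup m i + Poly_Mapping.lookup m (Suc i) - k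
    else Poly_Mapping.lookup m x)"
  by (simp add: redistribute_exp_def lookup_update)

lemma redistribute_exp_self: "redistribute_exp i m (Poly_Mapping.lookup m i) = m"
  by (rule poly_mapping_eqI) (simp add: lookup_redistribute_exp)

lemma redistribute_exp_swap: "redistribute_exp i m (Poly_Mapping.lookup m (Suc i)) = swap_exp i m"
  by (rule poly_mapping_eqI)
    (simp add: lookup_redistribute_exp lookup_swap_exp Transposition.transpose_def)

lemma redistribute_exp_eq_iff: "redistribute_exp i m k = redistribute_exp i m k' \<longleftrightarrow> k = k'"
  by (metis lookup_redistribute_exp)

lemma mon_redistribute_exp:
  assumes "k \<le> Poly_Mapping.lookup m i + Poly_Mapping.lookup m (Suc i)"
  shows "mon (redistribute_exp i m k) = mon (Poly_Mapping.update i 0 (Poly_Mapping.update (Suc i) 0 m)) *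
     (var i ^ k * var (Suc i) ^ (Poly_Mapping.lookup m i + Poly_Mapping.lookup m (Suc i) - k))"
proof -
  have "redistribute_exp i m k = Poly_Mapping.update i 0 (Poly_Mapping.update (Suc i) 0 m) +
      (Poly_Mapping.single i k +
       Poly_Mapping.single (Suc i) (Poly_Mapping.lookup m i + Poly_Mapping.lookup m (Suc i) - k))"
    by (rule poly_mapping_eqI)
      (simp add: lookup_redistribute_exp lookup_update lookup_add lookup_single when_def)
  thus ?thesis by (simp add: var_power mult_single)
qed

text \<open>The classical formula for \<open>\<pi>\<^sub>i x\<^sup>m\<close>, see \<open>demazure_eq_sum_demazure_mon\<close>.\<close>

definition demazure_mon :: "nat \<Rightarrow> (nat \<Rightarrow>\<^sub>0 nat) \<Rightarrow> mpoly" where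
  "demazure_mon i m =
     (\<Sum>k\<in>{Poly_Mapping.lookup m (Suc i)..Poly_Mapping.lookup m i}. mon (redistribute_exp i m k))
   - (\<Sum>k\<in>{Poly_Mapping.lookup m i<..<Poly_Mapping.lookup m (Suc i)}. mon (redistribute_exp i m k))"

lemma var_diff_mult_demazure_mon:
  "(var i - var (Suc i)) * demazure_mon i m = var i * mon m - var (Suc i) * mon (swap_exp i m)"
proof -
  define a where "a = Poly_Mapping.lookup m i"
  define b where "b = Poly_Mapping.lookup m (Suc i)"
  define m0 where "m0 = Poly_Mapping.update i 0 (Poly_Mapping.update (Suc i) 0 m)"
  define X where "X = var i"
  define Y where "Y = var (Suc i)"
  have me: "mon (redistribute_exp i m k) = mon m0 * (X ^ k * Y ^ (a + b - k))" if "k \<le> a + b" for k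
    using mon_redistribute_exp[of k m i] that by (simp add: a_def b_def m0_def X_def Y_def)
  have s1: "(\<Sum>k\<in>{b..a}. mon (redistribute_exp i m k)) = mon m0 * (\<Sum>k\<in>{b..a}. X ^ k * Y ^ (a + b - k))"
    unfolding sum_distrib_left by (rule sum.cong) (auto simp: me)
  have s2: "(\<Sum>k\<in>{a<..<b}. mon (redistribute_exp i m k)) = mon m0 * (\<Sum>k\<in>{a<..<b}. X ^ k * Y ^ (a + b - k))"
    unfolding sum_distrib_left by (rule sum.cong) (auto simp: me)
  have "(X - Y) * demazure_mon i m =
      mon m0 * ((X - Y) * ((\<Sum>k\<in>{b..a}. X ^ k * Y ^ (a + b - k)) - (\<Sum>k\<in>{a<..<b}. X ^ k * Y ^ (a + b - k))))"
    unfolding demazure_mon_def a_def[symmetric] b_def[symmetric] s1 s2 by (simp add: algebra_simps)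
  hence "(X - Y) * demazure_mon i m = mon m0 * (X * (X ^ a * Y ^ b) - Y * (X ^ b * Y ^ a))"
    by (simp only: diff_mult_sum_powers)
  moreover have "mon m = mon m0 * (X ^ a * Y ^ b)"
    using me[of a] redistribute_exp_self[of i m] by (simp add: a_def)
  moreover have "mon (swap_exp i m) = mon m0 * (X ^ b * Y ^ a)"
    using me[of b] redistribute_exp_swap[of i m] by (simp add: b_def)
  ultimately show ?thesis by (simp add: X_def Y_def algebra_simps)
qed

lemma lookup_demazure_mon:
  "Poly_Mapping.lookup (demazure_mon i m) \<gamma> =
   (\<Sum>k\<in>{Poly_Mapping.lookup m (Suc i)..Poly_Mapping.lookup m i}. if redistribute_exp i m k = \<gamma> then 1 else 0)
 - (\<Sum>k\<in>{Poly_Mapping.lookup m i<..<Poly_Mapping.lookup m (Suc i)}. if redistribute_exp i m k = \<gamma> then 1 else 0)"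
  by (simp add: demazure_mon_def lookup_minus lookup_sum lookup_single when_def)

lemma lookup_demazure_mon_nonzero:
  assumes "Poly_Mapping.lookup (demazure_mon i m) \<gamma> \<noteq> 0"
  obtains k where "Poly_Mapping.lookup m (Suc i) \<le> k \<and> k \<le> Poly_Mapping.lookup m i \<or>
      Poly_Mapping.lookup m i < k \<and> k < Poly_Mapping.lookup m (Suc i)" "\<gamma> = redistribute_exp i m k"
proof -
  have "\<exists>k. (Poly_Mapping.lookup m (Suc i) \<le> k \<and> k \<le> Poly_Mapping.lookup m i \<or>
      Poly_Mapping.lookup m i < k \<and> k < Poly_Mapping.lookup m (Suc i)) \<and> \<gamma> = redistribute_exp i m k"
  proof (rule ccontr)
    assume "\<not> ?thesis"
    hence "(\<Sum>k\<in>{Poly_Mapping.lookup m (Suc i)..Poly_Mapping.lookup m i}.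
          if redistribute_exp i m k = \<gamma> then 1 else 0) = (0::real)"
      "(\<Sum>k\<in>{Poly_Mapping.lookup m i<..<Poly_Mapping.lookup m (Suc i)}.
          if redistribute_exp i m k = \<gamma> then 1 else 0) = (0::real)"
      by (auto intro!: sum.neutral)
    thus False using assms by (simp add: lookup_demazure_mon)
  qed
  thus ?thesis using that by blast
qed

lemma lookup_demazure_mon_self:
  "Poly_Mapping.lookup (demazure_mon i m) m =
   (if Poly_Mapping.lookup m (Suc i) \<le> Poly_Mapping.lookup m i then 1 else 0)"
proof -
  have "redistribute_exp i m k = m \<longleftrightarrow> k = Poly_Mapping.lookup m i" for k
    by (metis redistribute_exp_self redistribute_exp_eq_iff)
  thus ?thesis by (simp add: lookup_demazure_mon sum.delta)
qed

lemma lookup_demazure_mon_swap: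
  "Poly_Mapping.lookup (demazure_mon i m) (swap_exp i m) =
   (if Poly_Mapping.lookup m (Suc i) \<le> Poly_Mapping.lookup m i then 1 else 0)"
proof -
  have "redistribute_exp i m k = swap_exp i m \<longleftrightarrow> k = Poly_Mapping.lookup m (Suc i)" for k
    by (metis redistribute_exp_swap redistribute_exp_eq_iff)
  thus ?thesis by (simp add: lookup_demazure_mon sum.delta)
qed

lemma var_diff_mult_sum_demazure_mon:
  "(var i - var (Suc i)) *
     (\<Sum>m\<in>Poly_Mapping.keys f. Poly_Mapping.single 0 (Poly_Mapping.lookup f m) * demazure_mon i m)
   = var i * f - swapvar i (var i * f)"
proof -
  let ?c = "\<lambda>m. Poly_Mapping.single 0 (Poly_Mapping.lookup f m) :: mpoly"
  have cm: "?c m * mon a = Poly_Mapping.single a (Poly_Mapping.lookup f m)" for a m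
    by (simp add: mult_single)
  have f: "f = (\<Sum>m\<in>Poly_Mapping.keys f. ?c m * mon m)"
    and sf: "swapvar i f = (\<Sum>m\<in>Poly_Mapping.keys f. ?c m * mon (swap_exp i m))"
    unfolding cm by (simp_all only: poly_mapping_sum_single swapvar_expand)
  have "var i * f - swapvar i (var i * f) = var i * f - var (Suc i) * swapvar i f"
    by (simp add: swapvar_mult)
  also have "\<dots> = (\<Sum>m\<in>Poly_Mapping.keys f. ?c m * (var i * mon m - var (Suc i) * mon (swap_exp i m)))"
    by (subst (1) f, subst sf) (simp add: sum_distrib_left sum_subtractf[symmetric] algebra_simps)
  also have "\<dots> = (var i - var (Suc i)) * (\<Sum>m\<in>Poly_Mapping.keys f. ?c m * demazure_mon i m)"
    unfolding sum_distrib_left by (rule sum.cong) (simp_all add: var_diff_mult_demazure_mon mult.left_commute)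
  finally show ?thesis by simp
qed

lemma demazure_eq_sum_demazure_mon:
  "demazure i f = (\<Sum>m\<in>Poly_Mapping.keys f. Poly_Mapping.single 0 (Poly_Mapping.lookup f m) * demazure_mon i m)"
  unfolding demazure_def divdiff_def
proof (rule the_equality)
  show "(var i - var (Suc i)) *
      (\<Sum>m\<in>Poly_Mapping.keys f. Poly_Mapping.single 0 (Poly_Mapping.lookup f m) * demazure_mon i m) =
      var i * f - swapvar i (var i * f)"
    by (rule var_diff_mult_sum_demazure_mon)
  show "g = (\<Sum>m\<in>Poly_Mapping.keys f. Poly_Mapping.single 0 (Poly_Mapping.lookup f m) * demazure_mon i m)"
    if "(var i - var (Suc i)) * g = var i * f - swapvar i (var i * f)" for g
  proof -
    have "(var i - var (Suc i)) * g = (var i - var (Suc i)) *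
        (\<Sum>m\<in>Poly_Mapping.keys f. Poly_Mapping.single 0 (Poly_Mapping.lookup f m) * demazure_mon i m)"
      using that var_diff_mult_sum_demazure_mon by simp
    thus ?thesis using var_diff_nonzero[of i "Suc i"] by simp
  qed
qed

lemma var_diff_mult_demazure:
  "(var i - var (Suc i)) * demazure i f = var i * f - var (Suc i) * swapvar i f"
  using var_diff_mult_sum_demazure_mon[of i f]
  by (simp add: demazure_eq_sum_demazure_mon swapvar_mult)

lemma lookup_demazure:
  "Poly_Mapping.lookup (demazure i f) \<gamma> =
   (\<Sum>m\<in>Poly_Mapping.keys f. Poly_Mapping.lookup f m * Poly_Mapping.lookup (demazure_mon i m) \<gamma>)"
  by (simp add: demazure_eq_sum_demazure_mon lookup_sum lookup_single_0_mult)

lemma swapvar_demazure: "swapvar i (demazure i f) = demazure i f"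
proof -
  let ?a = "var i :: mpoly" and ?b = "var (Suc i) :: mpoly"
  have "(?b - ?a) * swapvar i (demazure i f) = ?b * swapvar i f - ?a * f"
    using arg_cong[OF var_diff_mult_demazure[of i f], of "swapvar i"]
    by (simp add: swapvar_mult swapvar_diff)
  hence "(?a - ?b) * swapvar i (demazure i f) = ?a * f - ?b * swapvar i f"
    by (metis minus_diff_eq mult_minus_left)
  hence "(?a - ?b) * swapvar i (demazure i f) = (?a - ?b) * demazure i f"
    by (simp add: var_diff_mult_demazure)
  thus ?thesis using var_diff_nonzero[of i "Suc i"] by simp
qed

lemma demazure_commute:
  assumes ij: "Suc i < j"
  shows "demazure i (demazure j f) = demazure j (demazure i f)"
proof -
  define a where "a = (var i :: mpoly)"
  define b where "b = (var (Suc i) :: mpoly)"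
  define c where "c = (var j :: mpoly)"
  define d where "d = (var (Suc j) :: mpoly)"
  let ?s = "swapvar i" and ?t = "swapvar j"
  have sc: "?s c = c" "?s d = d" and ta: "?t a = a" "?t b = b"
    using ij by (simp_all add: a_def b_def c_def d_def swapvar_var_other)
  have st: "?s (?t f) = ?t (?s f)" using swapvar_commute[OF ij] .
  define g where "g = demazure j f"
  define h where "h = demazure i f"
  have eg: "(c - d) * g = c * f - d * ?t f" and eh: "(a - b) * h = a * f - b * ?s f"
    unfolding g_def h_def a_def b_def c_def d_def by (rule var_diff_mult_demazure)+
  have seg: "(c - d) * ?s g = c * ?s f - d * ?s (?t f)"
    using arg_cong[OF eg, of ?s] by (simp add: swapvar_mult swapvar_diff sc)
  have teh: "(a - b) * ?t h = a * ?t f - b * ?t (?s f)"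
    using arg_cong[OF eh, of ?t] by (simp add: swapvar_mult swapvar_diff ta)
  have e2: "(a - b) * demazure i g = a * g - b * ?s g" and e2': "(c - d) * demazure j h = c * h - d * ?t h"
    unfolding a_def b_def c_def d_def by (rule var_diff_mult_demazure)+
  have "(a - b) * (c - d) * demazure i g = (c - d) * ((a - b) * demazure i g)"
    by (simp add: algebra_simps)
  also have "\<dots> = (c - d) * (a * g - b * ?s g)"
    unfolding e2 ..
  also have "\<dots> = a * ((c - d) * g) - b * ((c - d) * ?s g)"
    by (simp add: algebra_simps)
  also have "\<dots> = c * ((a - b) * h) - d * ((a - b) * ?t h)"
    unfolding eg seg eh teh st by (simp add: algebra_simps)
  also have "\<dots> = (a - b) * (c * h - d * ?t h)"
    by (simp add: algebra_simps)
  also have "\<dots> = (a - b) * (c - d) * demazure j h"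
    unfolding e2'[symmetric] by (simp only: mult.assoc)
  finally have "(a - b) * (c - d) * demazure i g = (a - b) * (c - d) * demazure j h" .
  moreover have "(a - b) * (c - d) \<noteq> 0"
    using var_diff_nonzero[of i "Suc i"] var_diff_nonzero[of j "Suc j"] by (simp add: a_def b_def c_def d_def)
  ultimately show ?thesis by (simp add: g_def h_def)
qed

text \<open>Both sides of the braid relation, multiplied by the Vandermonde product of
  \<open>x\<^sub>i, x\<^sub>i\<^sub>+\<^sub>1, x\<^sub>i\<^sub>+\<^sub>2\<close>, expand to the same alternating combination of the
  six permuted copies of \<open>f\<close>, up to \<open>s\<^sub>i s\<^sub>i\<^sub>+\<^sub>1 s\<^sub>i = s\<^sub>i\<^sub>+\<^sub>1 s\<^sub>i s\<^sub>i\<^sub>+\<^sub>1\<close>.\<close>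

lemma vandermonde_mult_demazure_121:
  fixes f :: mpoly and i :: nat
  defines "a \<equiv> var i" and "b \<equiv> var (Suc i)" and "c \<equiv> var (Suc (Suc i))"
    and "s \<equiv> swapvar i" and "t \<equiv> swapvar (Suc i)"
  shows "(a - b) * (b - c) * (a - c) * demazure i (demazure (Suc i) (demazure i f)) =
    a * b * (a * f - b * s f) - a * c * (a * t f - c * t (s f)) + b * c * (b * s (t f) - c * s (t (s f)))"
proof -
  have sv: "s a = b" "s b = a" "s c = c" and tv: "t b = c" "t c = b"
    by (simp_all add: a_def b_def c_def s_def t_def swapvar_var_other)
  define g1 where "g1 = demazure i f"
  define g2 where "g2 = demazure (Suc i) g1"
  have E1: "(a - b) * g1 = a * f - b * s f" unfolding g1_def a_def b_def s_def by (rule var_diff_mult_demazure)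
  have E2: "(b - c) * g2 = b * g1 - c * t g1" unfolding g2_def c_def b_def t_def by (rule var_diff_mult_demazure)
  have E3: "(a - b) * demazure i g2 = a * g2 - b * s g2" unfolding a_def b_def s_def by (rule var_diff_mult_demazure)
  have sE2: "(a - c) * s g2 = a * g1 - c * s (t g1)"
    using arg_cong[OF E2, of s] swapvar_demazure[of i f]
    by (simp add: s_def swapvar_mult swapvar_diff sv[unfolded s_def] g1_def)
  have tE1: "(a - c) * t g1 = a * t f - c * t (s f)"
    using arg_cong[OF E1, of t] by (simp add: t_def swapvar_mult swapvar_diff tv[unfolded t_def] a_def swapvar_var_other)
  have stE1: "(b - c) * s (t g1) = b * s (t f) - c * s (t (s f))"
    using arg_cong[OF tE1, of s] by (simp add: s_def swapvar_mult swapvar_diff sv[unfolded s_def])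
  have "(a - b) * (b - c) * (a - c) * demazure i g2 = (b - c) * (a - c) * ((a - b) * demazure i g2)"
    by (simp add: algebra_simps)
  also have "\<dots> = a * (a - c) * ((b - c) * g2) - b * (b - c) * ((a - c) * s g2)"
    unfolding E3 by (simp add: algebra_simps)
  also have "\<dots> = a * b * ((a - b) * g1) - a * c * ((a - c) * t g1) + b * c * ((b - c) * s (t g1))"
    unfolding E2 sE2 by (simp add: algebra_simps)
  also have "\<dots> = a * b * (a * f - b * s f) - a * c * (a * t f - c * t (s f))
      + b * c * (b * s (t f) - c * s (t (s f)))"
    unfolding E1 tE1 stE1 ..
  finally show ?thesis unfolding g2_def g1_def .
qed

lemma vandermonde_mult_demazure_212:
  fixes f :: mpoly and i :: nat
  defines "a \<equiv> var i" and "b \<equiv> var (Suc i)" and "c \<equiv> var (Suc (Suc i))"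
    and "s \<equiv> swapvar i" and "t \<equiv> swapvar (Suc i)"
  shows "(a - b) * (b - c) * (a - c) * demazure (Suc i) (demazure i (demazure (Suc i) f)) =
    a * a * (b * f - c * t f) - b * b * (a * s f - c * s (t f)) + c * c * (a * t (s f) - b * t (s (t f)))"
proof -
  have sv: "s a = b" "s b = a" "s c = c" and tv: "t a = a" "t b = c" "t c = b"
    by (simp_all add: a_def b_def c_def s_def t_def swapvar_var_other)
  define h1 where "h1 = demazure (Suc i) f"
  define h2 where "h2 = demazure i h1"
  have F1: "(b - c) * h1 = b * f - c * t f" unfolding h1_def b_def c_def t_def by (rule var_diff_mult_demazure)
  have F2: "(a - b) * h2 = a * h1 - b * s h1" unfolding h2_def a_def b_def s_def by (rule var_diff_mult_demazure)
  have F3: "(b - c) * demazure (Suc i) h2 = b * h2 - c * t h2"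
    unfolding b_def c_def t_def by (rule var_diff_mult_demazure)
  have tF2: "(a - c) * t h2 = a * h1 - c * t (s h1)"
    using arg_cong[OF F2, of t] swapvar_demazure[of "Suc i" f]
    by (simp add: t_def swapvar_mult swapvar_diff tv[unfolded t_def] h1_def)
  have sF1: "(a - c) * s h1 = a * s f - c * s (t f)"
    using arg_cong[OF F1, of s] by (simp add: s_def swapvar_mult swapvar_diff sv[unfolded s_def])
  have tsF1: "(a - b) * t (s h1) = a * t (s f) - b * t (s (t f))"
    using arg_cong[OF sF1, of t] by (simp add: t_def swapvar_mult swapvar_diff tv[unfolded t_def])
  have "(a - b) * (b - c) * (a - c) * demazure (Suc i) h2 =
      (a - b) * (a - c) * ((b - c) * demazure (Suc i) h2)"
    by (simp add: algebra_simps)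
  also have "\<dots> = b * (a - c) * ((a - b) * h2) - c * (a - b) * ((a - c) * t h2)"
    unfolding F3 by (simp add: algebra_simps)
  also have "\<dots> = a * a * ((b - c) * h1) - b * b * ((a - c) * s h1) + c * c * ((a - b) * t (s h1))"
    unfolding F2 tF2 by (simp add: algebra_simps)
  also have "\<dots> = a * a * (b * f - c * t f) - b * b * (a * s f - c * s (t f))
      + c * c * (a * t (s f) - b * t (s (t f)))"
    unfolding F1 sF1 tsF1 ..
  finally show ?thesis unfolding h2_def h1_def .
qed

lemma demazure_braid:
  "demazure i (demazure (Suc i) (demazure i f)) = demazure (Suc i) (demazure i (demazure (Suc i) f))"
proof -
  let ?V = "(var i - var (Suc i)) * (var (Suc i) - var (Suc (Suc i))) * (var i - var (Suc (Suc i))) :: mpoly"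
  have "?V * demazure i (demazure (Suc i) (demazure i f)) =
      ?V * demazure (Suc i) (demazure i (demazure (Suc i) f))"
    unfolding vandermonde_mult_demazure_121 vandermonde_mult_demazure_212 swapvar_braid
    by (simp add: algebra_simps)
  moreover have "?V \<noteq> 0"
    using var_diff_nonzero[of i "Suc i"] var_diff_nonzero[of "Suc i" "Suc (Suc i)"]
      var_diff_nonzero[of i "Suc (Suc i)"] by simp
  ultimately show ?thesis by simp
qed

section \<open>Key polynomials are well defined\<close>

abbreviation comp_length :: "nat list \<Rightarrow> nat" where
  "comp_length \<alpha> \<equiv> perm_length (length \<alpha>) (wperm \<alpha>)"

lemma comp_length_swap_ascent_less:
  assumes "Suc i < length \<alpha>" "\<alpha>!i < \<alpha>!Suc i"
  shows "comp_length (swap_entries i (Suc i) \<alpha>) < comp_length \<alpha>"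
  using perm_length_wperm_swap_entries_less[of i "Suc i" \<alpha>] assms by auto

lemma keyrel_swap_ascent:
  "Suc i < length \<alpha> \<Longrightarrow> \<alpha>!i < \<alpha>!Suc i \<Longrightarrow> keyrel (swap_entries i (Suc i) \<alpha>) g \<Longrightarrow>
   keyrel \<alpha> (demazure i g)"
  using keyrel.step[of i \<alpha> g] by (simp add: swap_entries_def)

lemma keyrel_exists: "\<exists>f. keyrel \<alpha> f"
proof (induction "comp_length \<alpha>" arbitrary: \<alpha> rule: less_induct)
  case less
  show ?case
  proof (cases "sorted_wrt (\<ge>) \<alpha>")
    case True thus ?thesis using keyrel.dec by blast
  next
    case False
    then obtain i where i: "Suc i < length \<alpha>" "\<alpha>!i < \<alpha>!Suc i"
      by (auto simp: sorted_wrt_iff_nth_Suc_transp transp_def not_le)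
    then obtain g where "keyrel (swap_entries i (Suc i) \<alpha>) g"
      using less.hyps[OF comp_length_swap_ascent_less] by blast
    thus ?thesis using keyrel_swap_ascent[OF i] by blast
  qed
qed

lemma sorted_no_ascent: "sorted_wrt (\<ge>) (\<alpha>::nat list) \<Longrightarrow> Suc i < length \<alpha> \<Longrightarrow> \<not> \<alpha>!i < \<alpha>!Suc i"
  using sorted_wrt_nth_less[of "(\<ge>)" \<alpha> i "Suc i"] by simp

text \<open>Two ascents at distant positions \<open>i, j\<close> lead, after swapping both, to a common
  composition; the two ways of reaching \<open>\<alpha>\<close> from it agree since \<open>\<pi>\<^sub>i\<close> and \<open>\<pi>\<^sub>j\<close>
  commute.  For adjacent ascents the same argument uses the braid relation.\<close>

lemma keyrel_distant_ascents:
  assumes uniq: "\<And>\<beta> f g. comp_length \<beta> < comp_length \<alpha> \<Longrightarrow> keyrel \<beta> f \<Longrightarrow> keyrel \<beta> g \<Longrightarrow> f = g"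
    and ij: "Suc i < j" "Suc j < length \<alpha>" and ai: "\<alpha>!i < \<alpha>!Suc i" and aj: "\<alpha>!j < \<alpha>!Suc j"
    and f: "keyrel (swap_entries i (Suc i) \<alpha>) f" and g: "keyrel (swap_entries j (Suc j) \<alpha>) g"
  shows "demazure i f = demazure j g"
proof -
  define A where "A = swap_entries i (Suc i) \<alpha>"
  define B where "B = swap_entries j (Suc j) \<alpha>"
  define C where "C = swap_entries j (Suc j) A"
  have CB: "swap_entries i (Suc i) B = C"
    unfolding C_def A_def B_def by (rule nth_equalityI) (use ij in \<open>auto simp: nth_swap_entries\<close>)
  obtain h where h: "keyrel C h" using keyrel_exists by blast
  have "keyrel A (demazure j h)"
    using keyrel_swap_ascent[of j A h] h ij aj by (simp add: C_def A_def nth_swap_entries)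
  hence "f = demazure j h"
    using uniq[OF comp_length_swap_ascent_less _ f] ij ai by (simp add: A_def)
  moreover have "keyrel B (demazure i h)"
    using keyrel_swap_ascent[of i B h] h ij ai CB by (simp add: B_def nth_swap_entries)
  hence "g = demazure i h"
    using uniq[OF comp_length_swap_ascent_less _ g] ij aj by (simp add: B_def)
  ultimately show ?thesis using demazure_commute[OF ij(1)] by simp
qed

lemma keyrel_adjacent_ascents:
  assumes uniq: "\<And>\<beta> f g. comp_length \<beta> < comp_length \<alpha> \<Longrightarrow> keyrel \<beta> f \<Longrightarrow> keyrel \<beta> g \<Longrightarrow> f = g"
    and n: "Suc (Suc i) < length \<alpha>" and ai: "\<alpha>!i < \<alpha>!Suc i" and aj: "\<alpha>!Suc i < \<alpha>!Suc (Suc i)"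
    and f: "keyrel (swap_entries i (Suc i) \<alpha>) f" and g: "keyrel (swap_entries (Suc i) (Suc (Suc i)) \<alpha>) g"
  shows "demazure i f = demazure (Suc i) g"
proof -
  define A1 where "A1 = swap_entries i (Suc i) \<alpha>"
  define B1 where "B1 = swap_entries (Suc i) (Suc (Suc i)) \<alpha>"
  define A2 where "A2 = swap_entries (Suc i) (Suc (Suc i)) A1"
  define B2 where "B2 = swap_entries i (Suc i) B1"
  define C where "C = swap_entries i (Suc i) A2"
  have CB: "swap_entries (Suc i) (Suc (Suc i)) B2 = C"
    unfolding C_def A2_def B2_def A1_def B1_def
    by (rule nth_equalityI) (use n in \<open>auto simp: nth_swap_entries\<close>)
  obtain h where h: "keyrel C h" using keyrel_exists by blast
  have "keyrel A2 (demazure i h)"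
    using keyrel_swap_ascent[of i A2 h] h n ai aj by (simp add: C_def A2_def A1_def nth_swap_entries)
  hence "keyrel A1 (demazure (Suc i) (demazure i h))"
    using keyrel_swap_ascent[of "Suc i" A1] n ai aj by (simp add: A2_def A1_def nth_swap_entries)
  hence "f = demazure (Suc i) (demazure i h)"
    using uniq[OF comp_length_swap_ascent_less _ f] n ai by (simp add: A1_def)
  moreover have "keyrel B2 (demazure (Suc i) h)"
    using keyrel_swap_ascent[of "Suc i" B2 h] h n ai aj CB by (simp add: B2_def B1_def nth_swap_entries)
  hence "keyrel B1 (demazure i (demazure (Suc i) h))"
    using keyrel_swap_ascent[of i B1] n ai aj by (simp add: B2_def B1_def nth_swap_entries)
  hence "g = demazure i (demazure (Suc i) h)"
    using uniq[OF comp_length_swap_ascent_less _ g] n aj by (simp add: B1_def)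
  ultimately show ?thesis using demazure_braid by simp
qed

lemma keyrel_unique: "keyrel \<alpha> f \<Longrightarrow> keyrel \<alpha> g \<Longrightarrow> f = g"
proof (induction "comp_length \<alpha>" arbitrary: \<alpha> f g rule: less_induct)
  case less
  have two_ascents: "demazure i f' = demazure j g'"
    if "i < j" "Suc j < length \<alpha>" "\<alpha>!i < \<alpha>!Suc i" "\<alpha>!j < \<alpha>!Suc j"
      "keyrel (swap_entries i (Suc i) \<alpha>) f'" "keyrel (swap_entries j (Suc j) \<alpha>) g'" for i j f' g'
  proof (cases "j = Suc i")
    case True
    thus ?thesis using keyrel_adjacent_ascents[OF less.hyps] that by simp
  next
    case False
    thus ?thesis using keyrel_distant_ascents[OF less.hyps] that by simp
  qed
  from less.prems(1) show ?case
  proof cases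
    case dec
    from less.prems(2) show ?thesis
      by cases (use dec sorted_no_ascent in auto)
  next
    case (step i f')
    note f_step = step
    from less.prems(2) show ?thesis
    proof cases
      case dec thus ?thesis using f_step sorted_no_ascent by blast
    next
      case (step j g')
      have f': "keyrel (swap_entries i (Suc i) \<alpha>) f'" and g': "keyrel (swap_entries j (Suc j) \<alpha>) g'"
        using f_step step by (simp_all add: swap_entries_def)
      consider "i = j" | "i < j" | "j < i" by linarith
      thus ?thesis
      proof cases
        case 1
        thus ?thesis using less.hyps[OF comp_length_swap_ascent_less f'] g' f_step step by simp
      qed (use two_ascents f' g' f_step step in \<open>metis\<close>)+
    qed
  qed
qed

lemma keyrel_key: "keyrel \<alpha> (key \<alpha>)"
  unfolding key_def using keyrel_exists keyrel_unique by (metis theI')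

section \<open>Newton polytopes\<close>

lemma exp_point_eq_iff: "exp_point m = exp_point m' \<longleftrightarrow> m = m'"
  by (metis exp_point_def of_nat_eq_iff poly_mapping_eqI)

definition swap_coords :: "nat \<Rightarrow> (nat \<Rightarrow> real) \<Rightarrow> (nat \<Rightarrow> real)" where
  "swap_coords i x = (\<lambda>k. x (Transposition.transpose i (Suc i) k))"

lemma exp_point_swap_exp: "exp_point (swap_exp i m) = swap_coords i (exp_point m)"
  by (simp add: exp_point_def swap_coords_def lookup_swap_exp)

lemma linear_swap_coords: "linear (swap_coords i)"
  by (rule linearI) (simp_all add: swap_coords_def scaleR_fun_def fun_eq_iff)

lemma nth_swap_entries_adjacent:
  assumes "Suc i < length \<beta>"
  shows "Poly_Mapping.nth (swap_entries i (Suc i) \<beta>) = swap_exp i (Poly_Mapping.nth \<beta>)"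
proof (rule poly_mapping_eqI)
  fix k
  have "Transposition.transpose i (Suc i) k < length \<beta> \<longleftrightarrow> k < length \<beta>"
    using assms by (auto simp: Transposition.transpose_def)
  thus "Poly_Mapping.lookup (Poly_Mapping.nth (swap_entries i (Suc i) \<beta>)) k =
        Poly_Mapping.lookup (swap_exp i (Poly_Mapping.nth \<beta>)) k"
    using assms by (simp add: lookup_swap_exp nth_default_def nth_swap_entries_transpose)
qed

lemma exp_point_redistribute_exp_in_segment:
  assumes k: "Poly_Mapping.lookup m (Suc i) \<le> k \<and> k \<le> Poly_Mapping.lookup m i \<or>
              Poly_Mapping.lookup m i < k \<and> k < Poly_Mapping.lookup m (Suc i)"
  shows "exp_point (redistribute_exp i m k) \<in> closed_segment (exp_point m) (exp_point (swap_exp i m))"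
proof (cases "Poly_Mapping.lookup m i = Poly_Mapping.lookup m (Suc i)")
  case True
  hence "k = Poly_Mapping.lookup m i" using k by auto
  thus ?thesis by (simp add: redistribute_exp_self)
next
  case False
  define a where "a = Poly_Mapping.lookup m i"
  define b where "b = Poly_Mapping.lookup m (Suc i)"
  define u where "u = (real a - real k) / (real a - real b)"
  have "b \<le> k \<and> k \<le> a \<and> b < a \<or> a < k \<and> k < b" using k False by (auto simp: a_def b_def)
  hence u: "0 \<le> u" "u \<le> 1" "k \<le> a + b" unfolding u_def by (auto simp: divide_simps)
  have ua: "u * (real a - real b) = real a - real k" using False by (simp add: u_def a_def b_def)
  have "exp_point (redistribute_exp i m k) = (1 - u) *\<^sub>R exp_point m + u *\<^sub>R exp_point (swap_exp i m)"
  proof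
    fix x
    have "real k = (1 - u) * real a + u * real b" "real (a + b - k) = (1 - u) * real b + u * real a"
      using ua u(3) by (simp_all add: algebra_simps of_nat_diff)
    thus "exp_point (redistribute_exp i m k) x =
        ((1 - u) *\<^sub>R exp_point m + u *\<^sub>R exp_point (swap_exp i m)) x"
      by (auto simp: exp_point_def lookup_redistribute_exp scaleR_fun_def lookup_swap_exp a_def b_def
          Transposition.transpose_def algebra_simps)
  qed
  thus ?thesis using u by (auto simp: in_segment)
qed

lemma exp_points_demazure_subset:
  assumes "convex Q" and ends: "\<And>m. m \<in> Poly_Mapping.keys g \<Longrightarrow>
      exp_point m \<in> Q \<and> exp_point (swap_exp i m) \<in> Q"
  shows "exp_point ` Poly_Mapping.keys (demazure i g) \<subseteq> Q"
proof
  fix y assume "y \<in> exp_point ` Poly_Mapping.keys (demazure i g)"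
  then obtain \<gamma> where "\<gamma> \<in> Poly_Mapping.keys (demazure i g)" and y: "y = exp_point \<gamma>" by auto
  then obtain m where m: "m \<in> Poly_Mapping.keys g" "Poly_Mapping.lookup (demazure_mon i m) \<gamma> \<noteq> 0"
    by (metis (mono_tags, lifting) in_keys_iff lookup_demazure mult_zero_right sum.neutral)
  obtain k where "Poly_Mapping.lookup m (Suc i) \<le> k \<and> k \<le> Poly_Mapping.lookup m i \<or>
      Poly_Mapping.lookup m i < k \<and> k < Poly_Mapping.lookup m (Suc i)" "\<gamma> = redistribute_exp i m k"
    using lookup_demazure_mon_nonzero[OF m(2)] by blast
  hence "y \<in> closed_segment (exp_point m) (exp_point (swap_exp i m))"
    using exp_point_redistribute_exp_in_segment y by blast
  moreover have "closed_segment (exp_point m) (exp_point (swap_exp i m)) \<subseteq> Q"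
    using ends[OF m(1)] \<open>convex Q\<close> by (simp add: closed_segment_subset)
  ultimately show "y \<in> Q" by blast
qed

text \<open>Every exponent of \<open>\<pi>\<^sub>i x\<^sup>m\<close> lies on the segment from \<open>m\<close> to \<open>s\<^sub>i m\<close>, and an
  extreme point of \<open>Q\<close> can only lie on such a segment as one of its endpoints.\<close>

lemma demazure_mon_at_extreme_point:
  assumes ends: "exp_point m \<in> Q" "exp_point (swap_exp i m) \<in> Q"
    and ext: "exp_point \<gamma> extreme_point_of Q"
    and nz: "Poly_Mapping.lookup (demazure_mon i m) \<gamma> \<noteq> 0"
  shows "m = \<gamma> \<or> m = swap_exp i \<gamma>"
proof -
  obtain k where "Poly_Mapping.lookup m (Suc i) \<le> k \<and> k \<le> Poly_Mapping.lookup m i \<or>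
      Poly_Mapping.lookup m i < k \<and> k < Poly_Mapping.lookup m (Suc i)" "\<gamma> = redistribute_exp i m k"
    using lookup_demazure_mon_nonzero[OF nz] by blast
  hence "exp_point \<gamma> \<in> closed_segment (exp_point m) (exp_point (swap_exp i m))"
    using exp_point_redistribute_exp_in_segment by blast
  hence "exp_point \<gamma> = exp_point m \<or> exp_point \<gamma> = exp_point (swap_exp i m)"
    using ext ends unfolding extreme_point_of_def open_segment_def by blast
  thus ?thesis by (auto simp: exp_point_eq_iff)
qed

lemma lookup_demazure_at_extreme_point:
  assumes ends: "\<And>m. m \<in> Poly_Mapping.keys g \<Longrightarrow> exp_point m \<in> Q \<and> exp_point (swap_exp i m) \<in> Q"
    and ext: "exp_point \<gamma> extreme_point_of Q"
  shows "Poly_Mapping.lookup (demazure i g) \<gamma> =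
    (if Poly_Mapping.lookup \<gamma> i < Poly_Mapping.lookup \<gamma> (Suc i)
     then Poly_Mapping.lookup g (swap_exp i \<gamma>) else Poly_Mapping.lookup g \<gamma>)"
proof -
  define h where "h m = Poly_Mapping.lookup g m * Poly_Mapping.lookup (demazure_mon i m) \<gamma>" for m
  define T where "T = {\<gamma>, swap_exp i \<gamma>}"
  have "h m = 0" if "m \<notin> T" for m
    using demazure_mon_at_extreme_point[OF _ _ ext, of m i] ends[of m] that
    by (auto simp: h_def T_def in_keys_iff)
  hence "Poly_Mapping.lookup (demazure i g) \<gamma> = (\<Sum>m\<in>T. h m)"
    unfolding lookup_demazure h_def[symmetric]
    by (intro sum.mono_neutral_cong) (auto simp: T_def h_def in_keys_iff)
  moreover have "h (swap_exp i \<gamma>) = Poly_Mapping.lookup g (swap_exp i \<gamma>) *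
      (if Poly_Mapping.lookup \<gamma> i \<le> Poly_Mapping.lookup \<gamma> (Suc i) then 1 else 0)"
    using lookup_demazure_mon_swap[of i "swap_exp i \<gamma>"] by (simp add: h_def lookup_swap_exp)
  moreover have "h \<gamma> = Poly_Mapping.lookup g \<gamma> *
      (if Poly_Mapping.lookup \<gamma> (Suc i) \<le> Poly_Mapping.lookup \<gamma> i then 1 else 0)"
    by (simp add: h_def lookup_demazure_mon_self)
  moreover have "swap_exp i \<gamma> = \<gamma> \<longleftrightarrow> Poly_Mapping.lookup \<gamma> i = Poly_Mapping.lookup \<gamma> (Suc i)"
    by (metis lookup_swap_exp transpose_apply_first transpose_apply_second poly_mapping_eqI
        transpose_apply_other)
  ultimately show ?thesis by (cases "swap_exp i \<gamma> = \<gamma>") (auto simp: T_def)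
qed

definition exp_points :: "nat list \<Rightarrow> (nat \<Rightarrow> real) set" where
  "exp_points \<alpha> = (\<lambda>\<beta>. exp_point (Poly_Mapping.nth \<beta>)) ` tableau_lower \<alpha>"

lemma sum_squares_convex_combination:
  fixes u v :: real and x y :: "nat \<Rightarrow> real"
  assumes "u + v = 1"
  shows "(\<Sum>k<n. (u * x k + v * y k)^2) =
    u * (\<Sum>k<n. (x k)^2) + v * (\<Sum>k<n. (y k)^2) - u * v * (\<Sum>k<n. (x k - y k)^2)"
proof -
  have v: "v = 1 - u" using assms by simp
  have "(u * p + v * q)^2 = u * p^2 + v * q^2 - u * v * (p - q)^2" for p q :: real
    unfolding v by (simp add: power2_eq_square algebra_simps)
  thus ?thesis by (simp add: sum.distrib sum_subtractf sum_distrib_left)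
qed

text \<open>The vanishing of the coordinates beyond \<open>n\<close> stands in for a norm, which
  \<open>nat \<Rightarrow> real\<close> does not carry here.\<close>

lemma extreme_point_of_convex_hull_sphere:
  fixes S :: "(nat \<Rightarrow> real) set"
  assumes S: "S \<subseteq> {x. (\<Sum>k<n. (x k)^2) = R \<and> (\<forall>k\<ge>n. x k = 0)}" and "p \<in> S"
  shows "p extreme_point_of convex hull S"
proof -
  define B where "B = {x :: nat \<Rightarrow> real. (\<Sum>k<n. (x k)^2) \<le> R \<and> (\<forall>k\<ge>n. x k = 0)}"
  have "convex B" unfolding convex_def
  proof (intro ballI allI impI)
    fix x y and u v :: real assume xy: "x \<in> B" "y \<in> B" and uv: "0 \<le> u" "0 \<le> v" "u + v = 1"
    have "0 \<le> u * v * (\<Sum>k<n. (x k - y k)^2)" using uv by (simp add: sum_nonneg)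
    moreover have "u * (\<Sum>k<n. (x k)^2) + v * (\<Sum>k<n. (y k)^2) \<le> u * R + v * R"
      using xy uv by (intro add_mono mult_left_mono) (auto simp: B_def)
    ultimately show "u *\<^sub>R x + v *\<^sub>R y \<in> B"
      using xy sum_squares_convex_combination[OF uv(3), of x y n] uv(3)
      by (auto simp: B_def scaleR_fun_def distrib_right[symmetric])
  qed
  hence hull: "convex hull S \<subseteq> B" using S by (intro hull_minimal) (auto simp: B_def)
  show ?thesis
    unfolding extreme_point_of_def
  proof (intro conjI ballI notI)
    show "p \<in> convex hull S" using \<open>p \<in> S\<close> by (rule hull_inc)
  next
    fix a b assume "a \<in> convex hull S" "b \<in> convex hull S" "p \<in> open_segment a b"
    then obtain u where ab: "a \<noteq> b" "0 < u" "u < 1" "p = (1 - u) *\<^sub>R a + u *\<^sub>R b"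
      and aB: "a \<in> B" and bB: "b \<in> B" using hull by (auto simp: in_segment)
    have "R = (\<Sum>k<n. ((1 - u) * a k + u * b k)^2)"
      using S \<open>p \<in> S\<close> ab(4) by (auto simp: scaleR_fun_def)
    also have "\<dots> = (1 - u) * (\<Sum>k<n. (a k)^2) + u * (\<Sum>k<n. (b k)^2)
        - (1 - u) * u * (\<Sum>k<n. (a k - b k)^2)"
      by (rule sum_squares_convex_combination) simp
    also have "\<dots> \<le> (1 - u) * R + u * R - (1 - u) * u * (\<Sum>k<n. (a k - b k)^2)"
      using aB bB ab by (intro diff_right_mono add_mono mult_left_mono) (auto simp: B_def)
    finally have "(1 - u) * u * (\<Sum>k<n. (a k - b k)^2) \<le> 0" by (simp add: algebra_simps)
    hence "(\<Sum>k<n. (a k - b k)^2) \<le> 0" using ab by (simp add: mult_le_0_iff)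
    hence "\<forall>k\<in>{..<n}. (a k - b k)^2 = 0"
      using sum_nonneg_eq_0_iff[of "{..<n}" "\<lambda>k. (a k - b k)^2"] by (simp add: antisym sum_nonneg)
    hence "\<forall>k<n. a k = b k" by simp
    moreover have "\<forall>k\<ge>n. a k = b k" using aB bB by (simp add: B_def)
    ultimately show False using ab(1) by (metis ext not_less)
  qed
qed

lemma extreme_point_exp_points:
  assumes "p \<in> exp_points \<alpha>"
  shows "p extreme_point_of convex hull (exp_points \<alpha>)"
proof (rule extreme_point_of_convex_hull_sphere[OF _ assms])
  let ?n = "length \<alpha>"
  have "(\<Sum>k<?n. (exp_point (Poly_Mapping.nth \<beta>) k)^2) = (\<Sum>k<?n. (real (\<alpha>!k))^2) \<and>
      (\<forall>k\<ge>?n. exp_point (Poly_Mapping.nth \<beta>) k = 0)" if "\<beta> \<in> tableau_lower \<alpha>" for \<beta>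
  proof -
    have l: "length \<beta> = ?n" "mset \<beta> = mset \<alpha>" using that by (auto simp: tableau_lower_def)
    have "(\<Sum>k<?n. (exp_point (Poly_Mapping.nth \<beta>) k)^2) = sum_list (map (\<lambda>a. (real a)^2) \<beta>)"
      using l by (simp add: exp_point_def nth_default_def sum_list_sum_nth atLeast0LessThan)
    also have "\<dots> = sum_list (map (\<lambda>a. (real a)^2) \<alpha>)"
      using l(2) by (metis mset_map sum_mset_sum_list)
    finally show ?thesis
      using l by (simp add: exp_point_def nth_default_def sum_list_sum_nth atLeast0LessThan)
  qed
  thus "exp_points \<alpha> \<subseteq> {x. (\<Sum>k<?n. (x k)^2) = (\<Sum>k<?n. (real (\<alpha>!k))^2) \<and> (\<forall>k\<ge>?n. x k = 0)}"
    by (auto simp: exp_points_def)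
qed

lemma exp_points_swap_ascent:
  assumes "Suc i < length \<alpha>" "\<alpha>!i < \<alpha>!Suc i"
  shows "exp_points (swap_entries i (Suc i) \<alpha>) \<subseteq> exp_points \<alpha>"
    and "swap_coords i ` exp_points (swap_entries i (Suc i) \<alpha>) \<subseteq> exp_points \<alpha>"
proof -
  show "exp_points (swap_entries i (Suc i) \<alpha>) \<subseteq> exp_points \<alpha>"
    using tableau_lower_swap_ascent_subset[OF assms] by (auto simp: exp_points_def)
  have "swap_coords i (exp_point (Poly_Mapping.nth \<beta>)) \<in> exp_points \<alpha>"
    if "\<beta> \<in> tableau_lower (swap_entries i (Suc i) \<alpha>)" for \<beta>
  proof -
    have "Suc i < length \<beta>" using that assms by (simp add: tableau_lower_def)
    hence "swap_coords i (exp_point (Poly_Mapping.nth \<beta>)) = exp_point (Poly_Mapping.nth (swap_entries i (Suc i) \<beta>))"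
      by (simp add: nth_swap_entries_adjacent exp_point_swap_exp)
    thus ?thesis
      using swap_mem_tableau_lower_of_swap_ascent[OF assms that] by (simp add: exp_points_def)
  qed
  thus "swap_coords i ` exp_points (swap_entries i (Suc i) \<alpha>) \<subseteq> exp_points \<alpha>"
    by (auto simp: exp_points_def)
qed

lemma keyrel_newton:
  "keyrel \<alpha> f \<Longrightarrow> exp_point ` Poly_Mapping.keys f \<subseteq> convex hull (exp_points \<alpha>) \<and>
     (\<forall>\<beta>\<in>tableau_lower \<alpha>. Poly_Mapping.lookup f (Poly_Mapping.nth \<beta>) = 1)"
proof (induction rule: keyrel.induct)
  case (dec \<alpha>)
  hence "tableau_lower \<alpha> = {\<alpha>}" using tableau_lower_sorted self_mem_tableau_lower by blast
  thus ?case by (auto simp: monom_def exp_points_def intro!: hull_inc)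
next
  case (step i \<alpha> g)
  let ?\<alpha>' = "swap_entries i (Suc i) \<alpha>" and ?Q = "convex hull (exp_points \<alpha>)"
  have n: "Suc i < length \<alpha>" and a: "\<alpha>!i < \<alpha>!Suc i" using step.hyps by auto
  have IH: "exp_point ` Poly_Mapping.keys g \<subseteq> convex hull (exp_points ?\<alpha>')"
    "\<forall>\<beta>\<in>tableau_lower ?\<alpha>'. Poly_Mapping.lookup g (Poly_Mapping.nth \<beta>) = 1"
    using step.IH by (simp_all add: swap_entries_def)
  have "convex hull (exp_points ?\<alpha>') \<subseteq> ?Q"
    using exp_points_swap_ascent(1)[OF n a] by (rule hull_mono)
  moreover have "swap_coords i ` (convex hull (exp_points ?\<alpha>')) \<subseteq> ?Q"
    using hull_mono[OF exp_points_swap_ascent(2)[OF n a]]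
    by (simp add: convex_hull_linear_image[OF linear_swap_coords])
  ultimately have ends: "exp_point m \<in> ?Q \<and> exp_point (swap_exp i m) \<in> ?Q" if "m \<in> Poly_Mapping.keys g" for m
    using IH(1) that by (auto simp: exp_point_swap_exp image_subset_iff)
  have "Poly_Mapping.lookup (demazure i g) (Poly_Mapping.nth \<beta>) = 1" if \<beta>: "\<beta> \<in> tableau_lower \<alpha>" for \<beta>
  proof -
    have nb: "Suc i < length \<beta>" using \<beta> n by (simp add: tableau_lower_def)
    have "exp_point (Poly_Mapping.nth \<beta>) extreme_point_of ?Q"
      using \<beta> by (intro extreme_point_exp_points) (simp add: exp_points_def)
    hence "Poly_Mapping.lookup (demazure i g) (Poly_Mapping.nth \<beta>) =
        (if \<beta>!i < \<beta>!Suc i then Poly_Mapping.lookup g (Poly_Mapping.nth (swap_entries i (Suc i) \<beta>))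
         else Poly_Mapping.lookup g (Poly_Mapping.nth \<beta>))"
      using lookup_demazure_at_extreme_point[OF ends] nb
      by (simp add: nth_swap_entries_adjacent nth_default_def)
    thus ?thesis
      using IH(2) mem_tableau_lower_swap_ascent[OF n a \<beta>] swap_mem_tableau_lower_swap_ascent[OF n a \<beta>]
      by (simp add: not_less)
  qed
  thus ?case using exp_points_demazure_subset[OF convex_convex_hull ends] by blast
qed

lemma newton_key: "newton (key \<alpha>) = convex hull (exp_points \<alpha>)"
proof -
  have K: "exp_point ` Poly_Mapping.keys (key \<alpha>) \<subseteq> convex hull (exp_points \<alpha>)"
    "\<forall>\<beta>\<in>tableau_lower \<alpha>. Poly_Mapping.lookup (key \<alpha>) (Poly_Mapping.nth \<beta>) = 1"
    using keyrel_newton[OF keyrel_key] by auto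
  have "exp_points \<alpha> \<subseteq> exp_point ` Poly_Mapping.keys (key \<alpha>)"
    using K(2) by (auto simp: exp_points_def in_keys_iff)
  thus ?thesis
    unfolding newton_def using K(1) by (metis convex_convex_hull hull_minimal hull_mono subset_antisym)
qed

theorem theorem1p2:
  fixes \<alpha> :: "nat list"
  shows "vertices (newton (key \<alpha>)) = (\<lambda>\<beta>. exp_point (Poly_Mapping.nth \<beta>)) ` {\<beta>. comp_le \<beta> \<alpha>}"
proof -
  have "vertices (newton (key \<alpha>)) = exp_points \<alpha>"
    unfolding vertices_def newton_key
    using extreme_point_of_convex_hull extreme_point_exp_points by blast
  thus ?thesis by (simp add: exp_points_def comp_le_iff_tableau_lower)
qed

end
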